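(* Let $p\ge1$ be an integer, let $f\in C^p(\mathbb{R}^n;\mathbb{R}^n)$ with $f(0)=0$, and let $V\in C^{p+1}(\mathbb{R}^n;\mathbb{R}^+)$ be a Lyapunov function for $\dot z=f(z)$. Consider the hybrid system (2.2) associated with a consistent Runge–Kutta scheme for $\dot z=f(z)$ and a continuous step bound $\varphi:\mathbb{R}^n\to(0,r]$, and suppose: (i) for each fixed $x$, the map $[0,\varphi(x)]\ni h\mapsto V(x+hF(h,x))$ is $(p+1)$ times continuously differentiable; (ii) the scheme is of order $p$: for every $x$ there is $K>0$ with $|z(h,x)-x-hF(h,x)|\le Kh^{p+1}$ for all $h\in[0,\varphi(x)]$; (iii) there is $\lambda\in(0,1)$ such that for every $x\in\mathbb{R}^n$, $$\varphi(x)\min_{j=1,\dots,p}K_j(x)\le(\lambda-1)L_fV(x),$$ where $K_1(x):=\tfrac12\max\{\tfrac{\partial^2}{\partial h^2}V(x+hF(h,x)):h\in[0,\varphi(x)]\}$ and, for $j\ge2$, $$K_j(x):=\max\Big\{\sum_{i=2}^j\frac{s^{i-2}}{i!}L_f^iV(x)+\frac{s^{j-1}}{(j+1)!}\frac{\partial^{j+1}}{\partial h^{j+1}}V(x+hF(h,x)) : h,s\in[0,\varphi(x)]\Big\}.$$ Then $0\in\mathbb{R}^n$ is URGAS for (2.2). If moreover there exist $\sigma,K>0$ with $\nabla V(x)f(x)\le-2\sigma V(x)$ and $V(x)\ge K|x|^2$ for all $x$, then $0$ is robustly K-exponentially stable for (2.2).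
   Context: Standing framework: $f$ locally Lipschitz with $f(0)=0$; $z(t,x)$ is the solution of $\dot z=f(z)$ (system (2.1)) with $z(0)=x$. A consistent $s$-stage Runge–Kutta scheme has coefficients $a_{ij},b_i$ with $\sum_ib_i=1$ and is represented by $F(h,x):=\sum_{i=1}^sb_if(Y_i)$ where $Y_i=x+h\sum_{j=1}^sa_{ij}f(Y_j)$, $i=1,\dots,s$; the continuous step bound $\varphi:\mathbb{R}^n\to(0,r]$ ($r>0$) is assumed small enough that these equations have a unique solution for all $h\in[0,\varphi(x)]$ and that $|F(h,x)|\le|x|M(|x|)$ for some continuous nondecreasing $M$. The hybrid system (2.2): for each locally bounded $u:\mathbb{R}^+\to\mathbb{R}^+$ and $x_0$, $\tau_0=0$, $x(0)=x_0$, $h_i=\varphi(x(\tau_i))\exp(-u(\tau_i))$, $\tau_{i+1}=\tau_i+h_i$, $x(t)=x(\tau_i)+(t-\tau_i)F(h_i,x(\tau_i))$ on $[\tau_i,\tau_{i+1}]$; its solution is denoted $x(t,x_0;u)$. URGAS: (a) for every $\varepsilon>0$ there is $\delta>0$ with $|x_0|<\delta\Rightarrow|x(t,x_0;u)|<\varepsilon$ for all $t\ge0$ and all $u$; (b) for every $R$, $\sup\{|x(t,x_0;u)|:t\ge0,|x_0|\le R,u\}<\infty$; (c) for all $\varepsilon,R$ there is $T$ with $|x(t,x_0;u)|\le\varepsilon$ for $t\ge T$, $|x_0|\le R$, all $u$ (all $u$ locally bounded, nonnegative). Robustly K-exponentially stable: there exist $a\in K_\infty$, $\sigma>0$ with $|x(t,x_0;u)|\le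 e^{-\sigma t}a(|x_0|)$ for all $t,x_0,u$. A Lyapunov function for $\dot z=f(z)$ is a positive definite, radially unbounded $C^1$ function $V$ with $\nabla V(x)f(x)<0$ for $x\ne0$. $L_fV:=\nabla V\,f$ and $L_f^{i+1}V:=L_f(L_f^iV)$. *)

theory Defs
  imports "HOL-Analysis.Analysis"
begin

fun Ck :: "nat \<Rightarrow> ('a::euclidean_space \<Rightarrow> 'b::real_normed_vector) \<Rightarrow> bool" where
  "Ck 0 g = continuous_on UNIV g"
| "Ck (Suc k) g = (\<exists>D. (\<forall>x. (g has_derivative D x) (at x)) \<and> (\<forall>v. Ck k (\<lambda>x. D x v)))"

text \<open>k-th derivative of a real function of one real variable, taken within a set S
  (one-sided at the endpoints of an interval).\<close>
fun nderiv :: "nat \<Rightarrow> real set \<Rightarrow> (real \<Rightarrow> real) \<Rightarrow> real \<Rightarrow> real" where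
  "nderiv 0 S g = g"
| "nderiv (Suc k) S g = (\<lambda>t. vector_derivative (nderiv k S g) (at t within S))"

definition Ck_on :: "nat \<Rightarrow> real set \<Rightarrow> (real \<Rightarrow> real) \<Rightarrow> bool" where
  "Ck_on k S g \<longleftrightarrow>
     (\<forall>j<k. \<forall>t\<in>S. (nderiv j S g has_vector_derivative nderiv (Suc j) S g t) (at t within S))
     \<and> continuous_on S (nderiv k S g)"

definition lie :: "('a::euclidean_space \<Rightarrow> 'a) \<Rightarrow> ('a \<Rightarrow> real) \<Rightarrow> 'a \<Rightarrow> real" where
  "lie f V = (\<lambda>x. frechet_derivative V (at x) (f x))"

definition lie_iter :: "('a::euclidean_space \<Rightarrow> 'a) \<Rightarrow> nat \<Rightarrow> ('a \<Rightarrow> real) \<Rightarrow> 'a \<Rightarrow> real" where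
  "lie_iter f i V = (lie f ^^ i) V"

definition is_lyapunov :: "('a::euclidean_space \<Rightarrow> 'a) \<Rightarrow> ('a \<Rightarrow> real) \<Rightarrow> bool" where
  "is_lyapunov f V \<longleftrightarrow>
     V 0 = 0 \<and> (\<forall>x. x \<noteq> 0 \<longrightarrow> V x > 0) \<and> filterlim V at_top at_infinity
     \<and> Ck 1 V \<and> (\<forall>x. x \<noteq> 0 \<longrightarrow> lie f V x < 0)"

definition ode_sol :: "('a::euclidean_space \<Rightarrow> 'a) \<Rightarrow> 'a \<Rightarrow> (real \<Rightarrow> 'a) \<Rightarrow> bool" where
  "ode_sol f x zz \<longleftrightarrow> zz 0 = x \<and>
     (\<forall>t\<ge>0. (zz has_vector_derivative f (zz t)) (at t within {0..}))"

definition flow :: "('a::euclidean_space \<Rightarrow> 'a) \<Rightarrow> real \<Rightarrow> 'a \<Rightarrow> 'a" where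
  "flow f t x = (THE y. \<exists>zz. ode_sol f x zz \<and> zz t = y)"

text \<open>Stages indexed by 0..s-1.\<close>
definition rk_stages :: "nat \<Rightarrow> (nat \<Rightarrow> nat \<Rightarrow> real) \<Rightarrow> ('a::euclidean_space \<Rightarrow> 'a)
    \<Rightarrow> real \<Rightarrow> 'a \<Rightarrow> (nat \<Rightarrow> 'a) \<Rightarrow> bool" where
  "rk_stages s A f h x Y \<longleftrightarrow> (\<forall>i<s. Y i = x + h *\<^sub>R (\<Sum>j<s. A i j *\<^sub>R f (Y j)))"

definition rk_unique_stages :: "nat \<Rightarrow> (nat \<Rightarrow> nat \<Rightarrow> real) \<Rightarrow> ('a::euclidean_space \<Rightarrow> 'a)
    \<Rightarrow> real \<Rightarrow> 'a \<Rightarrow> bool" where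
  "rk_unique_stages s A f h x \<longleftrightarrow>
     (\<exists>Y. rk_stages s A f h x Y \<and> (\<forall>Y'. rk_stages s A f h x Y' \<longrightarrow> (\<forall>i<s. Y' i = Y i)))"

definition rk_F :: "nat \<Rightarrow> (nat \<Rightarrow> nat \<Rightarrow> real) \<Rightarrow> (nat \<Rightarrow> real) \<Rightarrow> ('a::euclidean_space \<Rightarrow> 'a)
    \<Rightarrow> real \<Rightarrow> 'a \<Rightarrow> 'a" where
  "rk_F s A b f h x = (let Y = (SOME Y. rk_stages s A f h x Y) in (\<Sum>i<s. b i *\<^sub>R f (Y i)))"

definition admissible_input :: "(real \<Rightarrow> real) \<Rightarrow> bool" where
  "admissible_input u \<longleftrightarrow> (\<forall>t\<ge>0. u t \<ge> 0) \<and> (\<forall>T. bounded (u ` {0..T}))"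

fun hyb_seq :: "(real \<Rightarrow> 'a::euclidean_space \<Rightarrow> 'a) \<Rightarrow> ('a \<Rightarrow> real) \<Rightarrow> (real \<Rightarrow> real)
    \<Rightarrow> 'a \<Rightarrow> nat \<Rightarrow> real \<times> 'a" where
  "hyb_seq F \<phi> u x0 0 = (0, x0)"
| "hyb_seq F \<phi> u x0 (Suc i) =
     (let \<tau> = fst (hyb_seq F \<phi> u x0 i); X = snd (hyb_seq F \<phi> u x0 i);
          h = \<phi> X * exp (- u \<tau>)
      in (\<tau> + h, X + h *\<^sub>R F h X))"

definition hyb_tau where "hyb_tau F \<phi> u x0 i = fst (hyb_seq F \<phi> u x0 i)"
definition hyb_X where "hyb_X F \<phi> u x0 i = snd (hyb_seq F \<phi> u x0 i)"
definition hyb_step where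
  "hyb_step F \<phi> u x0 i = \<phi> (hyb_X F \<phi> u x0 i) * exp (- u (hyb_tau F \<phi> u x0 i))"

text \<open>The relation "x(t,x0;u) = y": t lies in some [tau_i, tau_(i+1)] and y is the value
  of the linear interpolation there.\<close>
definition hyb_val :: "(real \<Rightarrow> 'a::euclidean_space \<Rightarrow> 'a) \<Rightarrow> ('a \<Rightarrow> real) \<Rightarrow> (real \<Rightarrow> real)
    \<Rightarrow> 'a \<Rightarrow> real \<Rightarrow> 'a \<Rightarrow> bool" where
  "hyb_val F \<phi> u x0 t y \<longleftrightarrow>
     (\<exists>i. hyb_tau F \<phi> u x0 i \<le> t \<and> t \<le> hyb_tau F \<phi> u x0 (Suc i) \<and>
          y = hyb_X F \<phi> u x0 i + (t - hyb_tau F \<phi> u x0 i) *\<^sub>R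
                  F (hyb_step F \<phi> u x0 i) (hyb_X F \<phi> u x0 i))"

text \<open>Solutions are defined on all of [0,oo) (the switching times diverge).\<close>
definition hyb_complete where
  "hyb_complete F \<phi> \<longleftrightarrow>
     (\<forall>x0 u. admissible_input u \<longrightarrow> filterlim (hyb_tau F \<phi> u x0) at_top sequentially)"

definition hyb_URGAS :: "(real \<Rightarrow> 'a::euclidean_space \<Rightarrow> 'a) \<Rightarrow> ('a \<Rightarrow> real) \<Rightarrow> bool" where
  "hyb_URGAS F \<phi> \<longleftrightarrow> hyb_complete F \<phi> \<and>
     (\<forall>\<epsilon>>0. \<exists>\<delta>>0. \<forall>x0 u t y. admissible_input u \<longrightarrow> norm x0 < \<delta> \<longrightarrow> t \<ge> 0 \<longrightarrow>
         hyb_val F \<phi> u x0 t y \<longrightarrow> norm y < \<epsilon>) \<and>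
     (\<forall>R. \<exists>B. \<forall>x0 u t y. admissible_input u \<longrightarrow> norm x0 \<le> R \<longrightarrow> t \<ge> 0 \<longrightarrow>
         hyb_val F \<phi> u x0 t y \<longrightarrow> norm y \<le> B) \<and>
     (\<forall>\<epsilon>>0. \<forall>R. \<exists>T. \<forall>x0 u t y. admissible_input u \<longrightarrow> norm x0 \<le> R \<longrightarrow> t \<ge> T \<longrightarrow>
         hyb_val F \<phi> u x0 t y \<longrightarrow> norm y \<le> \<epsilon>)"

definition class_K_inf :: "(real \<Rightarrow> real) \<Rightarrow> bool" where
  "class_K_inf a \<longleftrightarrow> continuous_on {0..} a \<and> a 0 = 0 \<and> strict_mono_on {0..} a
     \<and> filterlim a at_top at_top"

definition hyb_robust_K_exp_stable :: "(real \<Rightarrow> 'a::euclidean_space \<Rightarrow> 'a) \<Rightarrow> ('a \<Rightarrow> real) \<Rightarrow> bool" where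
  "hyb_robust_K_exp_stable F \<phi> \<longleftrightarrow> hyb_complete F \<phi> \<and>
     (\<exists>a \<sigma>. class_K_inf a \<and> \<sigma> > 0 \<and>
        (\<forall>x0 u t y. admissible_input u \<longrightarrow> t \<ge> 0 \<longrightarrow> hyb_val F \<phi> u x0 t y \<longrightarrow>
            norm y \<le> exp (- \<sigma> * t) * a (norm x0)))"

definition Kc :: "('a::euclidean_space \<Rightarrow> 'a) \<Rightarrow> ('a \<Rightarrow> real) \<Rightarrow> (real \<Rightarrow> 'a \<Rightarrow> 'a)
    \<Rightarrow> ('a \<Rightarrow> real) \<Rightarrow> nat \<Rightarrow> 'a \<Rightarrow> real" where
  "Kc f V F \<phi> j x =
    (let S = {0..\<phi> x}; g = (\<lambda>h. V (x + h *\<^sub>R F h x)) in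
     if j = 1 then 1/2 * Sup ((\<lambda>h. nderiv 2 S g h) ` S)
     else Sup ((\<lambda>(h, s). (\<Sum>i=2..j. s ^ (i - 2) / fact i * lie_iter f i V x)
                         + s ^ (j - 1) / fact (j + 1) * nderiv (j + 1) S g h) ` (S \<times> S)))"

end

theory Submission
  imports Defs
begin

(*
  Proof plan.  The Runge-Kutta hybrid system is shown to be stable by using the
  Lyapunov function V of the continuous system as a discrete Lyapunov function:

  (1) Calculus of the smoothness classes Ck: sums, products, linear images and Lie
      derivatives stay in the class, C^1 maps are locally Lipschitz.
  (2) Because V is a Lyapunov function, the flow z(t,x) of z' = f(z) exists for all
      t >= 0 and stays in a sublevel set of V (Picard iteration for a globally
      Lipschitz cut-off of f, plus uniqueness via a Gronwall-type estimate).
  (3) The order condition (ii) forces the first p Taylor coefficients in h of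
      g(h) = V(x + h F(h,x)) to be those of V(z(h,x)), i.e. the iterated Lie
      derivatives L_f^i V(x).  Taylor's formula with the constants K_j and
      condition (iii) then give the one-step decrease
            V(x + h F(h,x)) <= V(x) + lam h L_f V(x)     for h in [0, phi x].
  (4) An abstract locale shows that any hybrid system with such a decrease
      property is URGAS, and robustly K-exponentially stable if moreover
      L_f V <= -2 sigma V and V >= K |x|^2.
  The main theorem combines (3) and (4).
*)

section \<open>The smoothness classes Ck\<close>

lemma Ck_cont: "Ck k g \<Longrightarrow> continuous_on UNIV g"
proof (induction k arbitrary: g)
  case 0 then show ?case by simp
next
  case (Suc k)
  then obtain D where "\<forall>x. (g has_derivative D x) (at x)" by auto
  then show ?case
    by (meson continuous_at_imp_continuous_on has_derivative_continuous)
qed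

lemma Ck_Suc_D: "Ck (Suc k) g \<Longrightarrow> Ck k g"
proof (induction k arbitrary: g)
  case 0 then have "continuous_on UNIV g" by (intro Ck_cont)
  then show ?case by simp
next
  case (Suc k)
  then obtain D where "\<forall>x. (g has_derivative D x) (at x)" "\<forall>v. Ck (Suc k) (\<lambda>x. D x v)" by auto
  then show ?case using Suc.IH by auto
qed

lemma Ck_le: "Ck k g \<Longrightarrow> m \<le> k \<Longrightarrow> Ck m g"
proof (induction k)
  case 0 then show ?case by simp
next
  case (Suc k)
  then show ?case using Ck_Suc_D le_Suc_eq by blast
qed

lemma Ck_const: "Ck k (\<lambda>x. c)"
proof (induction k arbitrary: c)
  case 0 then show ?case by simp
next
  case (Suc k)
  show ?case
    by (rule Ck.simps(2)[THEN iffD2], rule exI[of _ "\<lambda>x v. 0"]) (auto simp: Suc)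
qed

lemma Ck_add: "Ck k g \<Longrightarrow> Ck k h \<Longrightarrow> Ck k (\<lambda>x. g x + h x)"
proof (induction k arbitrary: g h)
  case 0 then show ?case by (auto intro: continuous_intros)
next
  case (Suc k)
  from Suc.prems(1) obtain D1 where D1: "\<forall>x. (g has_derivative D1 x) (at x)" "\<forall>v. Ck k (\<lambda>x. D1 x v)" by auto
  from Suc.prems(2) obtain D2 where D2: "\<forall>x. (h has_derivative D2 x) (at x)" "\<forall>v. Ck k (\<lambda>x. D2 x v)" by auto
  show ?case
    apply (rule Ck.simps(2)[THEN iffD2], rule exI[of _ "\<lambda>x v. D1 x v + D2 x v"])
    using D1 D2 Suc.IH by (auto intro: has_derivative_add)
qed

lemma Ck_linear: "bounded_linear l \<Longrightarrow> Ck k g \<Longrightarrow> Ck k (\<lambda>x. l (g x))"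
proof (induction k arbitrary: g)
  case 0 then show ?case
    by (simp add: bounded_linear.continuous_on)
next
  case (Suc k)
  from Suc.prems(2) obtain D1 where D1: "\<forall>x. (g has_derivative D1 x) (at x)" "\<forall>v. Ck k (\<lambda>x. D1 x v)" by auto
  show ?case
    apply (rule Ck.simps(2)[THEN iffD2], rule exI[of _ "\<lambda>x v. l (D1 x v)"])
    using D1 Suc by (auto intro: bounded_linear.has_derivative)
qed

lemma Ck_mult: "Ck k g \<Longrightarrow> Ck k h \<Longrightarrow> Ck k (\<lambda>x. g x * h x :: real)"
proof (induction k arbitrary: g h)
  case 0 then show ?case by (auto intro: continuous_intros)
next
  case (Suc k)
  from Suc.prems(1) obtain D1 where D1: "\<forall>x. (g has_derivative D1 x) (at x)" "\<forall>v. Ck k (\<lambda>x. D1 x v)" by auto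
  from Suc.prems(2) obtain D2 where D2: "\<forall>x. (h has_derivative D2 x) (at x)" "\<forall>v. Ck k (\<lambda>x. D2 x v)" by auto
  have g: "Ck k g" and h: "Ck k h" using Suc.prems Ck_Suc_D by auto
  show ?case
    apply (rule Ck.simps(2)[THEN iffD2], rule exI[of _ "\<lambda>x v. g x * D2 x v + D1 x v * h x"])
  proof (intro conjI allI)
    fix x show "((\<lambda>x. g x * h x) has_derivative (\<lambda>v. g x * D2 x v + D1 x v * h x)) (at x)"
      using has_derivative_mult[OF D1(1)[rule_format] D2(1)[rule_format]] by simp
  next
    fix v show "Ck k (\<lambda>x. g x * D2 x v + D1 x v * h x)"
      using Ck_add[OF Suc.IH[OF g D2(2)[rule_format]] Suc.IH[OF D1(2)[rule_format] h]] .
  qed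
qed

lemma Ck_sum: "finite I \<Longrightarrow> (\<And>i. i \<in> I \<Longrightarrow> Ck k (g i)) \<Longrightarrow> Ck k (\<lambda>x. \<Sum>i\<in>I. g i x)"
  by (induction I rule: finite_induct) (auto intro: Ck_add Ck_const)

text \<open>The Lie derivative of a C^(k+1) function along a C^k field is C^k: write
  L_f W(x) = DW(x) f(x) in coordinates, a finite sum of products of C^k functions.\<close>
lemma Ck_lie:
  fixes f :: "'a::euclidean_space \<Rightarrow> 'a" and W :: "'a \<Rightarrow> real"
  assumes W: "Ck (Suc k) W" and f: "Ck k f"
  shows "Ck k (lie f W)"
proof -
  from W obtain D where D: "\<forall>x. (W has_derivative D x) (at x)" "\<forall>v. Ck k (\<lambda>x. D x v)" by auto
  have lin: "linear (D x)" for x using D(1) has_derivative_linear by blast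
  have coord: "lie f W x = (\<Sum>b\<in>Basis. (f x \<bullet> b) * D x b)" for x
  proof -
    have "lie f W x = D x (f x)"
      unfolding lie_def using frechet_derivative_at[OF D(1)[rule_format, of x]] by simp
    also have "\<dots> = D x (\<Sum>b\<in>Basis. (f x \<bullet> b) *\<^sub>R b)" by (simp only: euclidean_representation)
    also have "\<dots> = (\<Sum>b\<in>Basis. (f x \<bullet> b) * D x b)"
      by (simp add: linear_sum[OF lin] linear_scale[OF lin])
    finally show ?thesis .
  qed
  have "Ck k (\<lambda>x. \<Sum>b\<in>Basis. (f x \<bullet> b) * D x b)"
  proof (rule Ck_sum)
    fix b :: 'a
    show "Ck k (\<lambda>x. (f x \<bullet> b) * D x b)"
      by (rule Ck_mult[OF Ck_linear[OF bounded_linear_inner_left f] D(2)[rule_format]])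
  qed simp
  moreover have "lie f W = (\<lambda>x. \<Sum>b\<in>Basis. (f x \<bullet> b) * D x b)" by (rule ext) (rule coord)
  ultimately show ?thesis by simp
qed

lemma lie_iter_0: "lie_iter f 0 V = V"
  by (simp add: lie_iter_def)

lemma lie_iter_Suc: "lie_iter f (Suc i) V = lie f (lie_iter f i V)"
  by (simp add: lie_iter_def)

lemma Ck_lie_iter:
  assumes V: "Ck (p+1) V" and f: "Ck p f" and i: "i \<le> p+1"
  shows "Ck (p+1-i) (lie_iter f i V)"
  using i
proof (induction i)
  case 0 then show ?case using V by (simp add: lie_iter_0)
next
  case (Suc i)
  then have IH: "Ck (Suc (p - i)) (lie_iter f i V)" by (simp add: Suc_diff_le)
  have "Ck (p - i) f" using Ck_le[OF f] by simp
  then show ?case using Ck_lie[OF IH] by (simp add: lie_iter_Suc)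
qed

lemma lie_scale:
  assumes V: "Ck (Suc k) V"
  shows "frechet_derivative V (at y) (c *\<^sub>R w) = c * frechet_derivative V (at y) w"
proof -
  from V obtain D where D: "\<forall>x. (V has_derivative D x) (at x)" by auto
  have "frechet_derivative V (at y) = D y" using frechet_derivative_at[OF D[rule_format, of y]] by simp
  moreover have "linear (D y)" using D has_derivative_linear by blast
  ultimately show ?thesis by (simp add: linear_scale)
qed

lemma chain_lie:
  fixes W :: "'a::euclidean_space \<Rightarrow> real"
  assumes W: "Ck (Suc k) W"
    and z: "(z has_vector_derivative f (z t)) (at t within S)"
  shows "((\<lambda>t. W (z t)) has_vector_derivative lie f W (z t)) (at t within S)"
proof -
  from W obtain D where D: "\<forall>x. (W has_derivative D x) (at x)" by auto
  have "((W \<circ> z) has_vector_derivative D (z t) (f (z t))) (at t within S)"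
    by (rule vector_derivative_diff_chain_within[OF z has_derivative_at_withinI[OF D[rule_format]]])
  moreover have "lie f W (z t) = D (z t) (f (z t))"
    unfolding lie_def using frechet_derivative_at[OF D[rule_format, of "z t"]] by simp
  ultimately show ?thesis by (simp add: o_def)
qed

lemma cont_bounded_above:
  fixes h :: "'a::metric_space \<Rightarrow> real"
  assumes "continuous_on S h" "compact S"
  shows "\<exists>B. \<forall>x\<in>S. h x \<le> B"
  using compact_attains_sup[OF compact_continuous_image[OF assms]]
  by (metis empty_iff image_eqI image_is_empty)

lemma linear_norm_le_Basis:
  fixes l :: "'a::euclidean_space \<Rightarrow> 'b::real_normed_vector"
  assumes "linear l"
  shows "norm (l v) \<le> (\<Sum>b\<in>Basis. norm (l b)) * norm v"
proof -
  have "l v = (\<Sum>b\<in>Basis. (v \<bullet> b) *\<^sub>R l b)"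
    by (subst euclidean_representation[symmetric, of v])
       (simp add: linear_sum[OF assms] linear_scale[OF assms] del: euclidean_representation)
  then have "norm (l v) \<le> (\<Sum>b\<in>Basis. norm ((v \<bullet> b) *\<^sub>R l b))"
    by (simp only: norm_sum)
  also have "\<dots> = (\<Sum>b\<in>Basis. \<bar>v \<bullet> b\<bar> * norm (l b))" by simp
  also have "\<dots> \<le> (\<Sum>b\<in>Basis. norm v * norm (l b))"
    by (intro sum_mono mult_right_mono) (auto simp: Basis_le_norm)
  finally show ?thesis by (simp add: sum_distrib_left mult.commute)
qed

text \<open>C^1 maps are Lipschitz on compact convex sets (mean value inequality).\<close>
lemma Ck1_lipschitz:
  fixes g :: "'a::euclidean_space \<Rightarrow> 'b::real_normed_vector"
  assumes g: "Ck (Suc k) g" and S: "compact S" "convex S"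
  shows "\<exists>L. \<forall>a\<in>S. \<forall>b\<in>S. norm (g a - g b) \<le> L * norm (a - b)"
proof -
  from g obtain D where D: "\<forall>x. (g has_derivative D x) (at x)" "\<forall>v. Ck k (\<lambda>x. D x v)" by auto
  have lin: "linear (D x)" for x using D(1) has_derivative_linear by blast
  have "continuous_on S (\<lambda>x. \<Sum>b\<in>Basis. norm (D x b))"
  proof (intro continuous_on_sum continuous_on_norm)
    fix b :: 'a
    show "continuous_on S (\<lambda>x. D x b)"
      using Ck_cont[OF Ck_le[OF D(2)[rule_format, of b], of 0]] continuous_on_subset by blast
  qed
  then obtain B where B: "\<forall>x\<in>S. (\<Sum>b\<in>Basis. norm (D x b)) \<le> B"
    using cont_bounded_above S by blast
  have "norm (g a - g b) \<le> B * norm (a - b)" if "a \<in> S" "b \<in> S" for a b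
  proof (rule differentiable_bound[OF S(2) _ _ that])
    show "(g has_derivative D x) (at x within S)" for x
      using D(1) has_derivative_at_withinI by blast
    show "onorm (D x) \<le> B" if "x \<in> S" for x
    proof (rule onorm_le)
      fix v show "norm (D x v) \<le> B * norm v"
        using linear_norm_le_Basis[OF lin, of x v] B that
        by (meson mult_right_mono norm_ge_zero order_trans)
    qed
  qed
  then show ?thesis by blast
qed

section \<open>Existence and uniqueness of the flow\<close>

lemma nonincreasing_within:
  fixes q :: "real \<Rightarrow> real"
  assumes ab: "a \<le> b"
    and d: "\<And>t. t \<in> {a..b} \<Longrightarrow> (q has_real_derivative q' t) (at t within {a..b})"
    and n: "\<And>t. t \<in> {a..b} \<Longrightarrow> q' t \<le> 0"
  shows "q b \<le> q a"
proof (cases "a = b")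
  case True then show ?thesis by simp
next
  case False
  then have "a < b" using ab by simp
  from mvt_simple[OF this, of q "\<lambda>t. (*) (q' t)"] d
  obtain x where x: "x \<in> {a<..<b}" "q b - q a = q' x * (b - a)"
    by (auto simp: has_field_derivative_def)
  have "q' x * (b - a) \<le> 0" using n[of x] x(1) ab by (auto intro: mult_nonpos_nonneg)
  then show ?thesis using x(2) by simp
qed

text \<open>Uniqueness for z' = f(z) on [0,T] when f is Lipschitz along both solutions:
  exp(-2Lt) |z1 t - z2 t|^2 is nonincreasing and vanishes at 0.\<close>
lemma ode_unique:
  fixes z1 z2 :: "real \<Rightarrow> 'a::euclidean_space"
  assumes T: "0 \<le> T"
    and d1: "\<And>t. t \<in> {0..T} \<Longrightarrow> (z1 has_vector_derivative f (z1 t)) (at t within {0..T})"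
    and d2: "\<And>t. t \<in> {0..T} \<Longrightarrow> (z2 has_vector_derivative f (z2 t)) (at t within {0..T})"
    and init: "z1 0 = z2 0"
    and lip: "\<And>t. t \<in> {0..T} \<Longrightarrow> norm (f (z1 t) - f (z2 t)) \<le> L * norm (z1 t - z2 t)"
  shows "\<And>t. t \<in> {0..T} \<Longrightarrow> z1 t = z2 t"
proof -
  define d where "d t = z1 t - z2 t" for t
  define q where "q t = exp (- 2 * L * t) * (d t \<bullet> d t)" for t
  define q' where "q' t = - 2 * L * exp (- 2 * L * t) * (d t \<bullet> d t)
     + exp (- 2 * L * t) * (2 * (d t \<bullet> (f (z1 t) - f (z2 t))))" for t
  have dq: "(q has_real_derivative q' t) (at t within {0..T})" if t: "t \<in> {0..T}" for t
  proof -
    have dd: "(d has_vector_derivative (f (z1 t) - f (z2 t))) (at t within {0..T})"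
      unfolding d_def using d1[OF t] d2[OF t] by (rule has_vector_derivative_diff)
    have "((\<lambda>t. d t \<bullet> d t) has_real_derivative 2 * (d t \<bullet> (f (z1 t) - f (z2 t)))) (at t within {0..T})"
      unfolding has_field_derivative_def
      by (rule has_derivative_eq_rhs[OF has_derivative_inner[OF dd[unfolded has_vector_derivative_def] dd[unfolded has_vector_derivative_def]]])
         (auto simp: inner_commute algebra_simps)
    then show ?thesis unfolding q_def q'_def
      by (auto intro!: derivative_eq_intros simp: algebra_simps)
  qed
  have q'_nonpos: "q' t \<le> 0" if t: "t \<in> {0..T}" for t
  proof -
    have "d t \<bullet> (f (z1 t) - f (z2 t)) \<le> norm (d t) * norm (f (z1 t) - f (z2 t))"
      by (rule norm_cauchy_schwarz)
    also have "\<dots> \<le> norm (d t) * (L * norm (d t))"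
      using lip[OF t] unfolding d_def by (intro mult_left_mono) auto
    finally have "d t \<bullet> (f (z1 t) - f (z2 t)) \<le> L * (d t \<bullet> d t)"
      by (simp add: power2_norm_eq_inner[symmetric] power2_eq_square algebra_simps)
    then have "exp (- 2 * L * t) * (2 * (d t \<bullet> (f (z1 t) - f (z2 t))))
       \<le> exp (- 2 * L * t) * (2 * L * (d t \<bullet> d t))"
      by (intro mult_left_mono) auto
    then show ?thesis unfolding q'_def by (simp add: algebra_simps)
  qed
  fix t assume t: "t \<in> {0..T}"
  have "q t \<le> q 0"
  proof (rule nonincreasing_within[of 0 t q q'])
    fix s assume s: "s \<in> {0..t}"
    then have "s \<in> {0..T}" using t by auto
    then show "(q has_real_derivative q' s) (at s within {0..t})"
      using has_field_derivative_subset[OF dq[of s], of "{0..t}"] t by auto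
    show "q' s \<le> 0" using q'_nonpos \<open>s \<in> {0..T}\<close> .
  qed (use t in auto)
  also have "q 0 = 0" unfolding q_def d_def using init by simp
  finally have "d t \<bullet> d t \<le> 0" unfolding q_def
    by (simp add: mult_le_0_iff)
  then have "d t = 0" by (metis inner_gt_zero_iff not_less)
  then show "z1 t = z2 t" unfolding d_def by simp
qed

text \<open>Uniqueness for a C^1 field: both solutions stay in some ball, where f is Lipschitz.\<close>
lemma ode_unique_bounded:
  fixes f :: "'a::euclidean_space \<Rightarrow> 'a"
  assumes f: "Ck 1 f" and T: "0 \<le> T"
    and d1: "\<And>t. t \<in> {0..T} \<Longrightarrow> (z1 has_vector_derivative f (z1 t)) (at t within {0..T})"
    and d2: "\<And>t. t \<in> {0..T} \<Longrightarrow> (z2 has_vector_derivative f (z2 t)) (at t within {0..T})"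
    and init: "z1 0 = z2 0"
    and bounds: "\<And>t. t \<in> {0..T} \<Longrightarrow> norm (z1 t) \<le> R" "\<And>t. t \<in> {0..T} \<Longrightarrow> norm (z2 t) \<le> R"
    and t: "t \<in> {0..T}"
  shows "z1 t = z2 t"
proof -
  obtain L where L: "\<forall>a\<in>cball 0 R. \<forall>b\<in>cball 0 R. norm (f a - f b) \<le> L * norm (a - b)"
    using Ck1_lipschitz[of 0 f "cball 0 R"] f by auto
  show ?thesis
  proof (rule ode_unique[OF T d1 d2 init _ t])
    fix s assume "s \<in> {0..T}"
    then have "z1 s \<in> cball 0 R" "z2 s \<in> cball 0 R" using bounds by auto
    then show "norm (f (z1 s) - f (z2 s)) \<le> L * norm (z1 s - z2 s)" using L by blast
  qed
qed

fun picard :: "('a::euclidean_space \<Rightarrow> 'a) \<Rightarrow> 'a \<Rightarrow> nat \<Rightarrow> real \<Rightarrow> 'a" where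
  "picard g x 0 = (\<lambda>t. x)"
| "picard g x (Suc k) = (\<lambda>t. x + integral {0..t} (\<lambda>s. g (picard g x k s)))"

lemma poly_has_integral:
  fixes t :: real
  assumes "0 \<le> t"
  shows "((\<lambda>s. s ^ k / fact k) has_integral t ^ Suc k / fact (Suc k)) {0..t}"
proof -
  have "((\<lambda>s. s ^ k / fact k) has_integral (t ^ Suc k / fact (Suc k) - 0 ^ Suc k / fact (Suc k))) {0..t}"
  proof (rule fundamental_theorem_of_calculus[of 0 t "\<lambda>s. s ^ Suc k / fact (Suc k)" "\<lambda>s. s ^ k / fact k"])
    show "0 \<le> t" by (rule assms)
    fix s :: real assume "s \<in> {0..t}"
    have "((\<lambda>s. s ^ Suc k / fact (Suc k)) has_real_derivative (real (Suc k) * s ^ k) / fact (Suc k)) (at s)"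
      using DERIV_cdivide[OF DERIV_pow[of "Suc k" s], of "fact (Suc k)"] by simp
    moreover have "(real (Suc k) * s ^ k) / fact (Suc k) = s ^ k / fact k"
      by (simp only: fact_Suc of_nat_mult) (simp add: field_simps del: of_nat_Suc)
    ultimately show "((\<lambda>s. s ^ Suc k / fact (Suc k)) has_vector_derivative s ^ k / fact k) (at s within {0..t})"
      unfolding has_real_derivative_iff_has_vector_derivative[symmetric]
      by (auto intro: has_field_derivative_at_within)
  qed
  then show ?thesis by simp
qed

lemma picard_continuous:
  assumes gc: "continuous_on UNIV g"
  shows "continuous_on {0..T} (picard g x k)"
proof (induction k)
  case 0 then show ?case by simp
next
  case (Suc k)
  have gk: "continuous_on {0..T} (\<lambda>s. g (picard g x k s))"
    by (rule continuous_on_compose2[OF gc Suc]) simp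
  have "((\<lambda>u. integral {0..u} (\<lambda>s. g (picard g x k s))) has_vector_derivative g (picard g x k t))
          (at t within {0..T})" if "t \<in> {0..T}" for t
    using integral_has_vector_derivative[OF gk that] .
  then have "continuous_on {0..T} (\<lambda>u. integral {0..u} (\<lambda>s. g (picard g x k s)))"
    by (rule continuous_on_vector_derivative)
  then show ?case by (simp only: picard.simps) (intro continuous_on_add continuous_on_const)
qed

text \<open>For an L-Lipschitz field the k-th Picard increment is bounded by
  |g x| L^k t^(k+1)/(k+1)!, the terms of a convergent exponential series.\<close>
lemma picard_increment_bound:
  assumes gc: "continuous_on UNIV g"
    and lip: "\<And>a b. norm (g a - g b) \<le> L * norm (a - b)" and L: "0 \<le> L"
    and t: "0 \<le> t"
  shows "norm (picard g x (Suc k) t - picard g x k t) \<le> norm (g x) * L ^ k * (t ^ Suc k / fact (Suc k))"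
  using t
proof (induction k arbitrary: t)
  case 0
  then show ?case by simp
next
  case (Suc k)
  let ?p = "picard g x"
  have gcont: "continuous_on {0..t} (\<lambda>s. g (?p j s))" for j
    by (rule continuous_on_compose2[OF gc picard_continuous[OF gc]]) auto
  have "?p (Suc (Suc k)) t - ?p (Suc k) t
      = integral {0..t} (\<lambda>s. g (?p (Suc k) s)) - integral {0..t} (\<lambda>s. g (?p k s))"
    by simp
  also have "\<dots> = integral {0..t} (\<lambda>s. g (?p (Suc k) s) - g (?p k s))"
    by (rule integral_diff[symmetric]) (intro integrable_continuous_interval gcont)+
  also have "norm \<dots> \<le> integral {0..t} (\<lambda>s. L * (norm (g x) * L ^ k * (s ^ Suc k / fact (Suc k))))"
  proof (rule integral_norm_bound_integral)
    show "(\<lambda>s. g (?p (Suc k) s) - g (?p k s)) integrable_on {0..t}"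
      by (intro integrable_diff integrable_continuous_interval gcont)
    show "(\<lambda>s. L * (norm (g x) * L ^ k * (s ^ Suc k / fact (Suc k)))) integrable_on {0..t}"
      by (intro integrable_continuous_interval continuous_intros) auto
    fix s assume s: "s \<in> {0..t}"
    have "norm (g (?p (Suc k) s) - g (?p k s)) \<le> L * norm (?p (Suc k) s - ?p k s)" by (rule lip)
    also have "\<dots> \<le> L * (norm (g x) * L ^ k * (s ^ Suc k / fact (Suc k)))"
      using Suc.IH[of s] s L by (intro mult_left_mono) auto
    finally show "norm (g (?p (Suc k) s) - g (?p k s)) \<le> L * (norm (g x) * L ^ k * (s ^ Suc k / fact (Suc k)))" .
  qed
  also have "\<dots> = norm (g x) * L ^ Suc k * (t ^ Suc (Suc k) / fact (Suc (Suc k)))"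
    using has_integral_mult_right[OF poly_has_integral[OF Suc.prems, of "Suc k"], of "L * (norm (g x) * L ^ k)"]
    by (auto dest!: integral_unique simp: algebra_simps)
  finally show ?case .
qed

text \<open>By the Weierstrass M-test the Picard iterates converge uniformly on [0,T].\<close>
lemma picard_uniform_limit:
  assumes gc: "continuous_on UNIV g"
    and lip: "\<And>a b. norm (g a - g b) \<le> L * norm (a - b)" and L: "0 \<le> L"
    and T: "0 \<le> T"
  obtains z where "uniform_limit {0..T} (picard g x) z sequentially"
proof -
  let ?p = "picard g x"
  define M where "M i = norm (g x) * T * ((L * T) ^ i /\<^sub>R fact i)" for i
  have summM: "summable M"
    unfolding M_def by (intro summable_mult summable_exp_generic)
  have boundM: "norm (?p (Suc i) t - ?p i t) \<le> M i" if "t \<in> {0..T}" for i t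
  proof -
    have t: "0 \<le> t" "t \<le> T" using that by auto
    have "t ^ Suc i / fact (Suc i) \<le> T ^ Suc i / fact (Suc i)"
      using t by (intro divide_right_mono power_mono) auto
    also have "\<dots> \<le> T ^ Suc i / fact i"
      using T by (intro divide_left_mono) (auto simp: fact_mono)
    finally have "norm (g x) * L ^ i * (t ^ Suc i / fact (Suc i)) \<le> norm (g x) * L ^ i * (T ^ Suc i / fact i)"
      using L by (intro mult_left_mono) auto
    also have "\<dots> = M i" by (simp add: M_def power_mult_distrib field_simps)
    finally show ?thesis using picard_increment_bound[OF gc lip L t(1), of x i] by linarith
  qed
  define S where "S t = suminf (\<lambda>i. ?p (Suc i) t - ?p i t)" for t
  have ul0: "uniform_limit {0..T} (\<lambda>n t. \<Sum>i<n. ?p (Suc i) t - ?p i t) S sequentially"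
    unfolding S_def by (rule Weierstrass_m_test[OF boundM summM])
  have tele: "(\<Sum>i<n. ?p (Suc i) t - ?p i t) = ?p n t - x" for n t
    by (subst sum_lessThan_telescope) simp
  have "uniform_limit {0..T} ?p (\<lambda>t. x + S t) sequentially"
  proof (rule uniform_limitI)
    fix e :: real assume e: "e > 0"
    show "\<forall>\<^sub>F n in sequentially. \<forall>t\<in>{0..T}. dist (?p n t) (x + S t) < e"
    proof (rule eventually_mono[OF uniform_limitD[OF ul0 e]], intro ballI)
      fix n t assume "\<forall>t\<in>{0..T}. dist (\<Sum>i<n. ?p (Suc i) t - ?p i t) (S t) < e" and t: "t \<in> {0..T}"
      then have "norm ((?p n t - x) - S t) < e" by (simp only: tele dist_norm)
      then show "dist (?p n t) (x + S t) < e" by (simp add: dist_norm algebra_simps)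
    qed
  qed
  then show ?thesis by (rule that)
qed

text \<open>Global existence on [0,T] for a globally Lipschitz field: the uniform limit of
  the Picard iterates solves the integral equation.\<close>
lemma picard_exists:
  fixes g :: "'a::euclidean_space \<Rightarrow> 'a"
  assumes gc: "continuous_on UNIV g"
    and lip: "\<And>a b. norm (g a - g b) \<le> L * norm (a - b)" and L: "0 \<le> L"
    and T: "0 \<le> T"
  shows "\<exists>z. z 0 = x \<and> (\<forall>t\<in>{0..T}. (z has_vector_derivative g (z t)) (at t within {0..T}))"
proof -
  let ?p = "picard g x"
  obtain z where ul: "uniform_limit {0..T} ?p z sequentially"
    using picard_uniform_limit[OF gc lip L T] .
  have zc: "continuous_on {0..T} z"
    by (rule uniform_limit_theorem[OF _ ul]) (use picard_continuous[OF gc] in auto)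
  have gzc: "continuous_on {0..T} (\<lambda>s. g (z s))"
    using continuous_on_compose2[OF gc zc] by auto
  have "lipschitz_on L UNIV g" by (rule lipschitz_onI) (use lip L in \<open>auto simp: dist_norm\<close>)
  then have ulg: "uniform_limit {0..T} (\<lambda>n s. g (?p n s)) (\<lambda>s. g (z s)) sequentially"
    by (intro uniform_limit_compose_uniformly_continuous_on[OF ul lipschitz_on_uniformly_continuous]) auto
  have inteq: "z t = x + integral {0..t} (\<lambda>s. g (z s))" if t: "t \<in> {0..T}" for t
  proof -
    have sub: "{0..t} \<subseteq> {0..T}" using t by auto
    have gcont: "continuous_on {0..t} (\<lambda>s. g (?p n s))" for n
      by (rule continuous_on_compose2[OF gc picard_continuous[OF gc]]) auto
    obtain I J where IJ: "\<And>n. ((\<lambda>s. g (?p n s)) has_integral I n) {0..t}"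
        "((\<lambda>s. g (z s)) has_integral J) {0..t}" "(I \<longlongrightarrow> J) sequentially"
      by (rule uniform_limit_integral[OF uniform_limit_on_subset[OF ulg sub]])
         (use gcont in auto)
    have "?p (Suc n) t = x + I n" for n using IJ(1)[of n] by (auto dest: integral_unique)
    then have "(\<lambda>n. ?p (Suc n) t) \<longlonglongrightarrow> x + J" by (simp add: tendsto_add IJ(3))
    moreover have "(\<lambda>n. ?p (Suc n) t) \<longlonglongrightarrow> z t"
      using LIMSEQ_Suc[OF tendsto_uniform_limitI[OF ul t]] .
    ultimately have "z t = x + J" using LIMSEQ_unique by blast
    then show ?thesis using IJ(2) by (auto dest: integral_unique)
  qed
  have "z 0 = x" using inteq[of 0] T by simp
  moreover have "(z has_vector_derivative g (z t)) (at t within {0..T})" if t: "t \<in> {0..T}" for t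
  proof -
    have "((\<lambda>u. x + integral {0..u} (\<lambda>s. g (z s))) has_vector_derivative g (z t)) (at t within {0..T})"
      using has_vector_derivative_add[OF has_vector_derivative_const integral_has_vector_derivative[OF gzc t]]
      by simp
    then show ?thesis
      by (rule has_vector_derivative_transform_within[of _ _ _ _ 1]) (use t inteq in auto)
  qed
  ultimately show ?thesis by blast
qed

lemma lipschitz_weighted:
  fixes \<rho> :: "'a::real_normed_vector \<Rightarrow> real" and k :: "'a \<Rightarrow> 'b::real_normed_vector"
  assumes \<rho>: "\<And>y. 0 \<le> \<rho> y" "\<And>y. \<rho> y \<le> 1" "\<And>y w. \<bar>\<rho> y - \<rho> w\<bar> \<le> norm (y - w)"
    and k: "\<And>y w. norm (k y - k w) \<le> L * norm (y - w)" "\<And>y. norm (k y) \<le> Bk"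
  shows "norm (\<rho> y *\<^sub>R k y - \<rho> w *\<^sub>R k w) \<le> (\<bar>L\<bar> + Bk) * norm (y - w)"
proof -
  have "\<rho> y *\<^sub>R k y - \<rho> w *\<^sub>R k w = \<rho> y *\<^sub>R (k y - k w) + (\<rho> y - \<rho> w) *\<^sub>R k w"
    by (simp add: algebra_simps)
  then have "norm (\<rho> y *\<^sub>R k y - \<rho> w *\<^sub>R k w) \<le> \<rho> y * norm (k y - k w) + \<bar>\<rho> y - \<rho> w\<bar> * norm (k w)"
    using \<rho>(1)[of y] by (metis (no_types, lifting) abs_of_nonneg norm_scaleR norm_triangle_ineq)
  also have "\<dots> \<le> 1 * (\<bar>L\<bar> * norm (y - w)) + norm (y - w) * Bk"
  proof (intro add_mono mult_mono)
    show "norm (k y - k w) \<le> \<bar>L\<bar> * norm (y - w)"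
      using k(1)[of y w] by (meson abs_ge_self mult_right_mono norm_ge_zero order_trans)
  qed (use \<rho> k(2) in auto)
  finally show ?thesis by (simp add: algebra_simps)
qed

text \<open>Cut-off of a C^1 field: g = rho f with a Lipschitz weight 0 <= rho <= 1 that equals 1
  on the ball of radius R and vanishes outside the ball of radius R + 1; g is globally
  Lipschitz since f is Lipschitz and bounded on that ball.\<close>
lemma lipschitz_cutoff:
  fixes f :: "'a::euclidean_space \<Rightarrow> 'a"
  assumes f: "Ck 1 f" and R: "0 \<le> R"
  obtains g L \<rho> where "continuous_on UNIV g" "0 \<le> L" "\<And>a b. norm (g a - g b) \<le> L * norm (a - b)"
    "\<And>y. g y = \<rho> y *\<^sub>R f y" "\<And>y. 0 \<le> \<rho> y" "\<And>y. norm y \<le> R \<Longrightarrow> \<rho> y = 1"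
proof -
  define B where "B = cball (0::'a) (R + 1)"
  have B: "compact B" "convex B" "closed B" "B \<noteq> {}" unfolding B_def using R by auto
  obtain L1 where L1: "\<forall>a\<in>B. \<forall>b\<in>B. norm (f a - f b) \<le> L1 * norm (a - b)"
    using Ck1_lipschitz[of 0 f B] f B by auto
  obtain Bf where Bf: "\<forall>y\<in>B. norm (f y) \<le> Bf"
    using cont_bounded_above[OF continuous_on_norm[OF continuous_on_subset[OF Ck_cont[OF f]]] B(1)]
    by auto
  have Bf0: "0 \<le> Bf" using Bf B(4) by (meson all_not_in_conv norm_ge_zero order_trans)
  define cp where "cp = closest_point B"
  define \<rho> where "\<rho> y = max 0 (min 1 (R + 1 - norm y))" for y :: 'a
  define g where "g y = \<rho> y *\<^sub>R f (cp y)" for y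
  have cpB: "cp y \<in> B" for y unfolding cp_def using closest_point_in_set B by blast
  have cpL: "norm (cp y - cp w) \<le> norm (y - w)" for y w
    using closest_point_lipschitz[OF B(2,3,4)] unfolding cp_def dist_norm by blast
  have \<rho>L: "\<bar>\<rho> y - \<rho> w\<bar> \<le> norm (y - w)" for y w
    using norm_triangle_ineq3[of y w] unfolding \<rho>_def by (auto simp: max_def min_def)
  have \<rho>01: "0 \<le> \<rho> y" "\<rho> y \<le> 1" for y unfolding \<rho>_def by auto
  have gf: "g y = \<rho> y *\<^sub>R f y" for y
  proof (cases "y \<in> B")
    case True then show ?thesis unfolding g_def cp_def using closest_point_self by metis
  next
    case False then have "\<rho> y = 0" unfolding \<rho>_def B_def by auto
    then show ?thesis unfolding g_def by simp
  qed
  have glip: "norm (g y - g w) \<le> (\<bar>L1\<bar> + Bf) * norm (y - w)" for y w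
  proof -
    have "norm (f (cp y) - f (cp w)) \<le> \<bar>L1\<bar> * norm (y - w)" for y w
    proof -
      have "norm (f (cp y) - f (cp w)) \<le> L1 * norm (cp y - cp w)" using L1 cpB by blast
      also have "\<dots> \<le> \<bar>L1\<bar> * norm (y - w)"
        using cpL[of y w] by (meson abs_ge_self mult_mono abs_ge_zero norm_ge_zero order_trans)
      finally show ?thesis .
    qed
    then show ?thesis unfolding g_def using Bf cpB \<rho>01 \<rho>L
      by (intro lipschitz_weighted[where L = "\<bar>L1\<bar>", simplified]) auto
  qed
  have gcont: "continuous_on UNIV g"
  proof -
    have "continuous_on UNIV \<rho>" unfolding \<rho>_def by (intro continuous_intros)
    moreover have "continuous_on UNIV (\<lambda>y. f (cp y))"
      unfolding cp_def
      by (rule continuous_on_compose2[OF Ck_cont[OF f] continuous_on_closest_point[OF B(2,3,4)]]) auto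
    ultimately show ?thesis unfolding g_def by (intro continuous_on_scaleR)
  qed
  show ?thesis
  proof (rule that[OF gcont _ glip gf \<rho>01(1)])
    show "0 \<le> \<bar>L1\<bar> + Bf" using Bf0 by simp
    show "\<rho> y = 1" if "norm y \<le> R" for y unfolding \<rho>_def using that by auto
  qed
qed

text \<open>Solutions on [0,T] exist and stay in the region where V(y) <= V(x): solve the
  cut-off equation by Picard iteration; V decreases along it (L_g V = rho L_f V <= 0),
  so the solution never leaves the ball where g = f.\<close>
lemma local_solution:
  fixes f :: "'a::euclidean_space \<Rightarrow> 'a" and V :: "'a \<Rightarrow> real"
  assumes f: "Ck 1 f" and V: "Ck 1 V" and lie_nonpos: "\<And>y. lie f V y \<le> 0"
    and R: "\<And>y. V y \<le> V x \<Longrightarrow> norm y \<le> R" and T: "0 \<le> T"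
  shows "\<exists>w. w 0 = x \<and> (\<forall>t\<in>{0..T}. (w has_vector_derivative f (w t)) (at t within {0..T}))
              \<and> (\<forall>t\<in>{0..T}. norm (w t) \<le> R)"
proof -
  have V1: "Ck (Suc 0) V" using V by simp
  have "0 \<le> R" using R[of x] norm_ge_zero[of x] by linarith
  then obtain g L \<rho> where gc: "continuous_on UNIV g" and L: "0 \<le> L"
    and glip: "\<And>a b. norm (g a - g b) \<le> L * norm (a - b)"
    and g: "\<And>y. g y = \<rho> y *\<^sub>R f y" and \<rho>0: "\<And>y. 0 \<le> \<rho> y" and \<rho>1: "\<And>y. norm y \<le> R \<Longrightarrow> \<rho> y = 1"
    using lipschitz_cutoff[OF f] by blast
  obtain w where w0: "w 0 = x" and wd: "\<forall>t\<in>{0..T}. (w has_vector_derivative g (w t)) (at t within {0..T})"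
    using picard_exists[OF gc glip L T, of x] by blast
  have lie_g: "lie g V y \<le> 0" for y
    using lie_scale[OF V1] \<rho>0[of y] lie_nonpos[of y]
    unfolding lie_def g by (simp add: mult_nonneg_nonpos)
  have "V (w t) \<le> V (w 0)" if t: "t \<in> {0..T}" for t
  proof (rule nonincreasing_within[of 0 t "\<lambda>s. V (w s)" "\<lambda>s. lie g V (w s)"])
    fix s assume s: "s \<in> {0..t}"
    have "(w has_vector_derivative g (w s)) (at s within {0..t})"
      using has_vector_derivative_within_subset[OF wd[rule_format, of s]] s t by auto
    then show "((\<lambda>s. V (w s)) has_real_derivative lie g V (w s)) (at s within {0..t})"
      unfolding has_real_derivative_iff_has_vector_derivative
      using chain_lie[OF V1] by blast
    show "lie g V (w s) \<le> 0" by (rule lie_g)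
  qed (use t in auto)
  then have wR: "norm (w t) \<le> R" if "t \<in> {0..T}" for t using R w0 that by simp
  show ?thesis
  proof (intro exI conjI ballI)
    show "w 0 = x" by fact
    fix t assume t: "t \<in> {0..T}"
    show "norm (w t) \<le> R" using wR t .
    show "(w has_vector_derivative f (w t)) (at t within {0..T})"
      using wd[rule_format, OF t] g[of "w t"] \<rho>1[OF wR[OF t]] by simp
  qed
qed

lemma ode_sol_restrict:
  assumes "ode_sol f x zz" "0 \<le> T"
  shows "\<forall>t\<in>{0..T}. (zz has_vector_derivative f (zz t)) (at t within {0..T})"
proof
  fix t assume t: "t \<in> {0..T}"
  then have "(zz has_vector_derivative f (zz t)) (at t within {0..})"
    using assms(1) unfolding ode_sol_def by auto
  then show "(zz has_vector_derivative f (zz t)) (at t within {0..T})"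
    by (rule has_vector_derivative_within_subset) auto
qed

text \<open>For a C^1 field the forward solution is unique, so any solution is the flow.\<close>
lemma ode_sol_flow:
  fixes f :: "'a::euclidean_space \<Rightarrow> 'a"
  assumes f: "Ck 1 f" and sol: "ode_sol f x z" and t: "0 \<le> t"
  shows "flow f t x = z t"
  unfolding flow_def
proof (rule the_equality)
  show "\<exists>zz. ode_sol f x zz \<and> zz t = z t" using sol by blast
  fix y assume "\<exists>zz. ode_sol f x zz \<and> zz t = y"
  then obtain zz where zz: "ode_sol f x zz" "zz t = y" by blast
  have d1: "\<forall>s\<in>{0..t}. (zz has_vector_derivative f (zz s)) (at s within {0..t})"
    by (rule ode_sol_restrict[OF zz(1) t])
  have d2: "\<forall>s\<in>{0..t}. (z has_vector_derivative f (z s)) (at s within {0..t})"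
    by (rule ode_sol_restrict[OF sol t])
  have sol_bounded: "\<exists>B. \<forall>s\<in>{0..t}. norm (w s) \<le> B"
    if "\<forall>s\<in>{0..t}. (w has_vector_derivative f (w s)) (at s within {0..t})" for w
  proof -
    have "continuous_on {0..t} w" using that by (intro continuous_on_vector_derivative) blast
    then show ?thesis using cont_bounded_above[OF continuous_on_norm compact_Icc] by blast
  qed
  obtain B1 B2 where B: "\<forall>s\<in>{0..t}. norm (zz s) \<le> B1" "\<forall>s\<in>{0..t}. norm (z s) \<le> B2"
    using sol_bounded[OF d1] sol_bounded[OF d2] by blast
  have "zz t = z t"
  proof (rule ode_unique_bounded[where R = "max B1 B2", OF f t])
    show "zz 0 = z 0" using zz sol unfolding ode_sol_def by simp
  qed (use d1 d2 B t in \<open>auto intro: le_max_iff_disj[THEN iffD2]\<close>)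
  then show "y = z t" using zz by simp
qed

text \<open>Global forward flow of a C^1 field admitting a Lyapunov-type function: the local
  solutions on [0,T] agree on their common domains and patch together.\<close>
lemma global_flow:
  fixes f :: "'a::euclidean_space \<Rightarrow> 'a" and V :: "'a \<Rightarrow> real"
  assumes f: "Ck 1 f" and V: "Ck 1 V" and lie_nonpos: "\<And>y. lie f V y \<le> 0"
    and R: "\<And>y. V y \<le> V x \<Longrightarrow> norm y \<le> R"
  obtains z where "ode_sol f x z" "\<And>t. 0 \<le> t \<Longrightarrow> flow f t x = z t"
proof -
  define P where "P T w \<longleftrightarrow> w 0 = x \<and> (\<forall>t\<in>{0..T}. (w has_vector_derivative f (w t)) (at t within {0..T}))
              \<and> (\<forall>t\<in>{0..T}. norm (w t) \<le> R)" for T w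
  define Z where "Z T = (SOME w. P T w)" for T
  have PZ: "P T (Z T)" if "0 \<le> T" for T
  proof -
    have "\<exists>w. P T w" unfolding P_def by (rule local_solution[OF f V lie_nonpos R that])
    then show ?thesis unfolding Z_def by (rule someI_ex)
  qed
  have agree: "Z T1 s = Z T2 s" if T: "0 \<le> T1" "T1 \<le> T2" and s: "s \<in> {0..T1}" for T1 T2 s
  proof (rule ode_unique_bounded[OF f T(1) _ _ _ _ _ s, where R = R])
    have P1: "P T1 (Z T1)" and P2: "P T2 (Z T2)" using PZ T by auto
    fix t assume t: "t \<in> {0..T1}"
    show "(Z T1 has_vector_derivative f (Z T1 t)) (at t within {0..T1})" using P1 t unfolding P_def by blast
    have "(Z T2 has_vector_derivative f (Z T2 t)) (at t within {0..T2})" using P2 t T unfolding P_def by auto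
    then show "(Z T2 has_vector_derivative f (Z T2 t)) (at t within {0..T1})"
      by (rule has_vector_derivative_within_subset) (use T in auto)
    show "norm (Z T1 t) \<le> R" "norm (Z T2 t) \<le> R" using P1 P2 t T unfolding P_def by auto
  next
    show "Z T1 0 = Z T2 0" using PZ T unfolding P_def by auto
  qed
  define z where "z t = Z (\<bar>t\<bar> + 1) t" for t
  have zeq: "z s = Z (t + 1) s" if "0 \<le> t" "s \<in> {0..t+1}" for s t
  proof (cases "s \<le> t")
    case True then show ?thesis unfolding z_def using agree[of "s+1" "t+1" s] that by auto
  next
    case False then show ?thesis unfolding z_def using agree[of "t+1" "s+1" s] that by auto
  qed
  have zd: "(z has_vector_derivative f (z t)) (at t within {0..})" if t: "0 \<le> t" for t
  proof -
    have "(Z (t+1) has_vector_derivative f (Z (t+1) t)) (at t within {0..t+1})"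
      using PZ[of "t+1"] t unfolding P_def by auto
    moreover have "at t within {0..t+1} = at t within {0..}"
      by (rule at_within_nhd[where S="{t - 1 <..< t + 1}"]) auto
    ultimately have "(Z (t+1) has_vector_derivative f (Z (t+1) t)) (at t within {0..})" by simp
    then have "(z has_vector_derivative f (Z (t+1) t)) (at t within {0..})"
    proof (rule has_vector_derivative_transform_within[of _ _ _ _ 1])
      fix s assume s: "s \<in> {0..}" "dist s t < 1"
      then have "s \<in> {0..t+1}" by (auto simp: dist_real_def)
      then show "Z (t+1) s = z s" using zeq[OF t] by simp
    qed (use t in auto)
    then show ?thesis using zeq[of t t] t by simp
  qed
  have sol: "ode_sol f x z"
    unfolding ode_sol_def using zd PZ[of 1] unfolding z_def P_def by auto
  show ?thesis using that[OF sol ode_sol_flow[OF f sol]] by blast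
qed

section \<open>Taylor expansions in the step size\<close>

lemma rpoly_has_integral:
  fixes h :: real
  assumes "0 \<le> h"
  shows "((\<lambda>t. (h - t) ^ k / fact k) has_integral h ^ Suc k / fact (Suc k)) {0..h}"
proof -
  have "((\<lambda>t. (h - t) ^ k / fact k) has_integral
         ((\<lambda>t. - ((h - t) ^ Suc k / fact (Suc k))) h - (\<lambda>t. - ((h - t) ^ Suc k / fact (Suc k))) 0)) {0..h}"
  proof (rule fundamental_theorem_of_calculus[of 0 h "\<lambda>t. - ((h - t) ^ Suc k / fact (Suc k))" "\<lambda>t. (h - t) ^ k / fact k"])
    show "0 \<le> h" by (rule assms)
    fix s :: real assume "s \<in> {0..h}"
    have d: "((\<lambda>t. h - t) has_real_derivative -1) (at s)"
      using DERIV_diff[OF DERIV_const DERIV_ident] by simp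
    have "((\<lambda>t. (h - t) ^ Suc k) has_real_derivative real (Suc k) * (h - s) ^ k * -1) (at s)"
      using DERIV_chain2[OF DERIV_pow[of "Suc k" "h - s"] d] by simp
    then have "((\<lambda>t. - ((h - t) ^ Suc k / fact (Suc k))) has_real_derivative
                 - ((real (Suc k) * (h - s) ^ k * -1) / fact (Suc k))) (at s)"
      by (intro DERIV_minus DERIV_cdivide)
    moreover have "- ((real (Suc k) * (h - s) ^ k * -1) / fact (Suc k)) = (h - s) ^ k / fact k"
      by (simp only: fact_Suc of_nat_mult) (simp add: field_simps del: of_nat_Suc)
    ultimately show "((\<lambda>t. - ((h - t) ^ Suc k / fact (Suc k))) has_vector_derivative (h - s) ^ k / fact k)
        (at s within {0..h})"
      unfolding has_real_derivative_iff_has_vector_derivative[symmetric]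
      by (auto intro: has_field_derivative_at_within)
  qed
  then show ?thesis by simp
qed

lemma taylor_upper_bound:
  fixes D :: "nat \<Rightarrow> real \<Rightarrow> real"
  assumes h: "0 \<le> h"
    and derivs: "\<And>m t. m < Suc n \<Longrightarrow> t \<in> {0..h} \<Longrightarrow> (D m has_vector_derivative D (Suc m) t) (at t within {0..h})"
    and bound: "\<And>t. t \<in> {0..h} \<Longrightarrow> D (Suc n) t \<le> c"
  shows "D 0 h \<le> (\<Sum>i<Suc n. h ^ i / fact i * D i 0) + c * (h ^ Suc n / fact (Suc n))"
proof -
  have "((\<lambda>x. (h - x) ^ n / fact n * D (Suc n) x) has_integral D 0 h - (\<Sum>i<Suc n. h ^ i / fact i * D i 0)) {0..h}"
    using Taylor_has_integral[of "Suc n" D "D 0" 0 h] h derivs by simp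
  moreover have "((\<lambda>x. (h - x) ^ n / fact n * c) has_integral c * (h ^ Suc n / fact (Suc n))) {0..h}"
    using has_integral_mult_left[OF rpoly_has_integral[OF h, of n], of c] by (simp add: mult.commute)
  moreover have "(h - x) ^ n / fact n * D (Suc n) x \<le> (h - x) ^ n / fact n * c" if "x \<in> {0..h}" for x
    using bound[OF that] that by (intro mult_left_mono) auto
  ultimately have "D 0 h - (\<Sum>i<Suc n. h ^ i / fact i * D i 0) \<le> c * (h ^ Suc n / fact (Suc n))"
    by (rule has_integral_le)
  then show ?thesis by simp
qed

lemma taylor_abs_bound:
  fixes D :: "nat \<Rightarrow> real \<Rightarrow> real"
  assumes h: "0 \<le> h"
    and derivs: "\<And>m t. m < Suc n \<Longrightarrow> t \<in> {0..h} \<Longrightarrow> (D m has_vector_derivative D (Suc m) t) (at t within {0..h})"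
    and bound: "\<And>t. t \<in> {0..h} \<Longrightarrow> \<bar>D (Suc n) t\<bar> \<le> c"
  shows "\<bar>D 0 h - (\<Sum>i<Suc n. h ^ i / fact i * D i 0)\<bar> \<le> c * (h ^ Suc n / fact (Suc n))"
proof -
  have "D 0 h \<le> (\<Sum>i<Suc n. h ^ i / fact i * D i 0) + c * (h ^ Suc n / fact (Suc n))"
    using taylor_upper_bound[where D = D and n = n and c = c, OF h derivs] bound by (meson abs_le_D1)
  moreover have "- D 0 h \<le> (\<Sum>i<Suc n. h ^ i / fact i * - D i 0) + c * (h ^ Suc n / fact (Suc n))"
    using taylor_upper_bound[where D = "\<lambda>m t. - D m t" and n = n and c = c, OF h] derivs bound
    by (simp add: has_vector_derivative_minus abs_le_iff)
  ultimately show ?thesis by (simp add: sum_negf)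
qed

lemma small_poly_coeffs_zero:
  fixes a :: "nat \<Rightarrow> real"
  assumes "0 < \<delta>" "\<And>h. 0 < h \<Longrightarrow> h \<le> \<delta> \<Longrightarrow> \<bar>\<Sum>i<n. a i * h ^ i\<bar> \<le> C * h ^ n"
  shows "\<forall>i<n. a i = 0"
  using assms(2)
proof (induction n arbitrary: a)
  case 0 then show ?case by simp
next
  case (Suc n)
  have ev: "\<forall>\<^sub>F h in at_right 0. \<bar>\<Sum>i<Suc n. a i * h ^ i\<bar> \<le> C * h ^ Suc n"
    unfolding eventually_at_right_field using assms(1) Suc.prems by (intro exI[of _ \<delta>]) auto
  have l1: "((\<lambda>h. \<bar>\<Sum>i<Suc n. a i * h ^ i\<bar>) \<longlongrightarrow> \<bar>\<Sum>i<Suc n. a i * 0 ^ i\<bar>) (at_right 0)"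
    by (intro tendsto_intros)
  have l2: "((\<lambda>h. C * h ^ Suc n) \<longlongrightarrow> C * 0 ^ Suc n) (at_right (0::real))"
    by (intro tendsto_intros)
  have "\<bar>\<Sum>i<Suc n. a i * 0 ^ i\<bar> \<le> C * 0 ^ Suc n"
    by (rule tendsto_le[OF _ l2 l1 ev]) simp
  moreover have "(\<Sum>i<Suc n. a i * 0 ^ i) = a 0"
    by (simp add: sum.lessThan_Suc_shift del: sum.lessThan_Suc)
  ultimately have a0: "a 0 = 0" by simp
  have "\<bar>\<Sum>i<n. a (Suc i) * h ^ i\<bar> \<le> C * h ^ n" if h: "0 < h" "h \<le> \<delta>" for h
  proof -
    have "(\<Sum>i<Suc n. a i * h ^ i) = h * (\<Sum>i<n. a (Suc i) * h ^ i)"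
      by (simp add: sum.lessThan_Suc_shift a0 sum_distrib_left algebra_simps del: sum.lessThan_Suc)
    then have "h * \<bar>\<Sum>i<n. a (Suc i) * h ^ i\<bar> \<le> h * (C * h ^ n)"
      using Suc.prems[OF h] h by (simp add: abs_mult algebra_simps)
    then show ?thesis using h by simp
  qed
  from Suc.IH[OF this] have "\<forall>i<n. a (Suc i) = 0" by blast
  then show ?case using a0 by (auto simp: less_Suc_eq_0_disj)
qed

lemma same_taylor_coeffs:
  fixes D E :: "nat \<Rightarrow> real \<Rightarrow> real"
  assumes \<delta>: "0 < \<delta>"
    and dD: "\<And>m t. m < Suc n \<Longrightarrow> t \<in> {0..\<delta>} \<Longrightarrow> (D m has_vector_derivative D (Suc m) t) (at t within {0..\<delta>})"
    and dE: "\<And>m t. m < Suc n \<Longrightarrow> t \<in> {0..\<delta>} \<Longrightarrow> (E m has_vector_derivative E (Suc m) t) (at t within {0..\<delta>})"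
    and cD: "continuous_on {0..\<delta>} (D (Suc n))" and cE: "continuous_on {0..\<delta>} (E (Suc n))"
    and close: "\<And>h. h \<in> {0..\<delta>} \<Longrightarrow> \<bar>D 0 h - E 0 h\<bar> \<le> C * h ^ Suc n"
    and i: "i \<le> n"
  shows "D i 0 = E i 0"
proof -
  obtain BD where BD: "\<forall>t\<in>{0..\<delta>}. \<bar>D (Suc n) t\<bar> \<le> BD"
    using cont_bounded_above[OF continuous_on_norm[OF cD] compact_Icc] by auto
  obtain BE where BE: "\<forall>t\<in>{0..\<delta>}. \<bar>E (Suc n) t\<bar> \<le> BE"
    using cont_bounded_above[OF continuous_on_norm[OF cE] compact_Icc] by auto
  define a where "a i = (D i 0 - E i 0) / fact i" for i
  have "\<bar>\<Sum>i<Suc n. a i * h ^ i\<bar> \<le> (BD / fact (Suc n) + BE / fact (Suc n) + C) * h ^ Suc n"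
    if h: "0 < h" "h \<le> \<delta>" for h
  proof -
    have sub: "{0..h} \<subseteq> {0..\<delta>}" using h by auto
    have TD: "\<bar>D 0 h - (\<Sum>i<Suc n. h ^ i / fact i * D i 0)\<bar> \<le> BD * (h ^ Suc n / fact (Suc n))"
      by (rule taylor_abs_bound)
         (use h sub BD in \<open>auto intro: has_vector_derivative_within_subset[OF dD]\<close>)
    have TE: "\<bar>E 0 h - (\<Sum>i<Suc n. h ^ i / fact i * E i 0)\<bar> \<le> BE * (h ^ Suc n / fact (Suc n))"
      by (rule taylor_abs_bound)
         (use h sub BE in \<open>auto intro: has_vector_derivative_within_subset[OF dE]\<close>)
    have "(\<Sum>i<Suc n. a i * h ^ i)
        = (\<Sum>i<Suc n. h ^ i / fact i * D i 0) - (\<Sum>i<Suc n. h ^ i / fact i * E i 0)"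
      unfolding a_def sum_subtractf[symmetric] by (rule sum.cong) (simp_all add: field_simps)
    then have "\<bar>\<Sum>i<Suc n. a i * h ^ i\<bar>
        \<le> BD * (h ^ Suc n / fact (Suc n)) + BE * (h ^ Suc n / fact (Suc n)) + C * h ^ Suc n"
      using TD TE close[of h] h unfolding atLeastAtMost_iff abs_le_iff by (intro conjI) linarith+
    also have "\<dots> = (BD / fact (Suc n) + BE / fact (Suc n) + C) * h ^ Suc n"
      by (simp add: field_simps)
    finally show ?thesis .
  qed
  then have "\<forall>i<Suc n. a i = 0" by (rule small_poly_coeffs_zero[OF \<delta>])
  then show ?thesis using i unfolding a_def by simp
qed

lemma Ck_on_derivs:
  assumes "Ck_on (Suc p) S G" "m < Suc p" "t \<in> S"
  shows "(nderiv m S G has_vector_derivative nderiv (Suc m) S G t) (at t within S)"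
  using assms unfolding Ck_on_def by blast

lemma Ck_on_cont:
  assumes "Ck_on (Suc p) S G" "m \<le> Suc p"
  shows "continuous_on S (nderiv m S G)"
proof (cases "m = Suc p")
  case True then show ?thesis using assms unfolding Ck_on_def by blast
next
  case False
  then have "m < Suc p" using assms by simp
  then show ?thesis using Ck_on_derivs[OF assms(1)]
    by (intro continuous_on_vector_derivative) blast
qed

lemma taylor_coeffs_lie:
  fixes f :: "'a::euclidean_space \<Rightarrow> 'a" and V :: "'a \<Rightarrow> real" and Fh :: "real \<Rightarrow> 'a"
  assumes f: "Ck p f" and V: "Ck (p+1) V" and \<delta>: "0 < \<delta>"
    and G: "Ck_on (p+1) {0..\<delta>} (\<lambda>h. V (x + h *\<^sub>R Fh h))"
    and z0: "z 0 = x" and zd: "\<forall>t\<in>{0..\<delta>}. (z has_vector_derivative f (z t)) (at t within {0..\<delta>})"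
    and order: "\<forall>h\<in>{0..\<delta>}. norm (z h - x - h *\<^sub>R Fh h) \<le> K * h ^ (p+1)"
    and Fb: "\<forall>h\<in>{0..\<delta>}. norm (Fh h) \<le> BF"
    and i: "i \<le> p"
  shows "nderiv i {0..\<delta>} (\<lambda>h. V (x + h *\<^sub>R Fh h)) 0 = lie_iter f i V x"
proof -
  define S where "S = {0..\<delta>}"
  define g where "g = (\<lambda>h. V (x + h *\<^sub>R Fh h))"
  define E where "E m t = lie_iter f m V (z t)" for m t
  have GS: "Ck_on (Suc p) S g" using G unfolding S_def g_def by simp
  have zc: "continuous_on S z"
    using zd unfolding S_def by (intro continuous_on_vector_derivative) blast
  have dE: "(E m has_vector_derivative E (Suc m) t) (at t within S)" if "m < Suc p" "t \<in> S" for m t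
  proof -
    have "Ck (Suc (p - m)) (lie_iter f m V)"
      using Ck_lie_iter[OF V f, of m] that by (simp add: Suc_diff_le)
    then show ?thesis using zd that(2) unfolding E_def lie_iter_Suc S_def by (intro chain_lie) auto
  qed
  have cE: "continuous_on S (E (Suc p))"
  proof -
    have "Ck 0 (lie_iter f (Suc p) V)" using Ck_lie_iter[OF V f, of "p+1"] by simp
    then show ?thesis unfolding E_def using continuous_on_compose2[OF _ zc] by auto
  qed
  text \<open>V is Lipschitz on a ball containing both curves, so the two functions of h
    differ by at most |LV| K h^(p+1).\<close>
  obtain Rz where Rz: "\<forall>t\<in>S. norm (z t) \<le> Rz"
    using cont_bounded_above[OF continuous_on_norm[OF zc]] unfolding S_def by auto
  define Rb where "Rb = max (norm x + \<delta> * BF) Rz"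
  obtain LV where LV: "\<forall>a\<in>cball 0 Rb. \<forall>b\<in>cball 0 Rb. norm (V a - V b) \<le> LV * norm (a - b)"
    using Ck1_lipschitz[of p V "cball 0 Rb"] V by auto
  have close: "\<bar>g h - E 0 h\<bar> \<le> (\<bar>LV\<bar> * K) * h ^ Suc p" if h: "h \<in> S" for h
  proof -
    have "norm (x + h *\<^sub>R Fh h) \<le> norm x + h * norm (Fh h)"
      using h unfolding S_def by (metis atLeastAtMost_iff abs_of_nonneg norm_scaleR norm_triangle_ineq)
    also have "\<dots> \<le> norm x + \<delta> * BF" using Fb h unfolding S_def by (intro add_left_mono mult_mono) auto
    finally have "x + h *\<^sub>R Fh h \<in> cball 0 Rb" unfolding Rb_def by simp
    moreover have "z h \<in> cball 0 Rb" using Rz h unfolding Rb_def by force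
    ultimately have "\<bar>g h - E 0 h\<bar> \<le> \<bar>LV\<bar> * norm (z h - x - h *\<^sub>R Fh h)"
      using LV unfolding g_def E_def lie_iter_0
      by (smt (verit, best) mult_right_mono norm_ge_zero norm_minus_commute real_norm_def diff_diff_eq)
    also have "\<dots> \<le> \<bar>LV\<bar> * (K * h ^ (p+1))"
      using order h unfolding S_def by (intro mult_left_mono) auto
    finally show ?thesis by simp
  qed
  have "nderiv i S g 0 = E i 0"
  proof (rule same_taylor_coeffs[OF \<delta>, where n = p])
    show "(nderiv m S g has_vector_derivative nderiv (Suc m) S g t) (at t within {0..\<delta>})"
      if "m < Suc p" "t \<in> {0..\<delta>}" for m t
      using Ck_on_derivs[OF GS that(1)] that(2) unfolding S_def by blast
    show "(E m has_vector_derivative E (Suc m) t) (at t within {0..\<delta>})"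
      if "m < Suc p" "t \<in> {0..\<delta>}" for m t using dE that unfolding S_def by blast
    show "continuous_on {0..\<delta>} (nderiv (Suc p) S g)" using Ck_on_cont[OF GS] unfolding S_def by blast
    show "continuous_on {0..\<delta>} (E (Suc p))" using cE unfolding S_def .
    show "\<bar>nderiv 0 S g h - E 0 h\<bar> \<le> \<bar>LV\<bar> * K * h ^ Suc p" if "h \<in> {0..\<delta>}" for h
      using close that unfolding S_def by simp
  qed (rule i)
  then show ?thesis unfolding S_def g_def E_def using z0 by simp
qed

section \<open>One-step decrease of V\<close>

lemma taylor_sum_split:
  fixes h :: real
  assumes "1 \<le> j"
  shows "(\<Sum>i<Suc j. h ^ i / fact i * a i) = a 0 + h * a 1 + h^2 * (\<Sum>i=2..j. h ^ (i - 2) / fact i * a i)"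
  using assms
proof (induction j)
  case 0 then show ?case by simp
next
  case (Suc j)
  show ?case
  proof (cases "j = 0")
    case True then show ?thesis by (simp add: numeral_2_eq_2)
  next
    case False
    have "Suc j = 2 + (Suc j - 2)" using False by simp
    then have "h^2 * h ^ (Suc j - 2) = h ^ Suc j" by (metis power_add)
    then show ?thesis using Suc.IH False by (simp add: sum.cl_ivl_Suc algebra_simps)
  qed
qed

text \<open>This is how the constants K_j enter.\<close>
lemma taylor_quadratic_bound:
  fixes D :: "nat \<Rightarrow> real \<Rightarrow> real"
  assumes j: "1 \<le> j" and h: "0 < h"
    and derivs: "\<And>k t. k < Suc j \<Longrightarrow> t \<in> {0..h} \<Longrightarrow> (D k has_vector_derivative D (Suc k) t) (at t within {0..h})"
    and bracket: "\<And>t. t \<in> {0..h} \<Longrightarrow>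
        (\<Sum>i=2..j. h ^ (i - 2) / fact i * D i 0) + h ^ (j - 1) / fact (j + 1) * D (Suc j) t \<le> m"
  shows "D 0 h \<le> D 0 0 + h * D 1 0 + h^2 * m"
proof -
  define \<Sigma> where "\<Sigma> = (\<Sum>i=2..j. h ^ (i - 2) / fact i * D i 0)"
  define c where "c = (m - \<Sigma>) * fact (j + 1) / h ^ (j - 1)"
  have hp: "0 < h ^ (j - 1)" using h by simp
  have scale: "\<And>a F N r. (0::real) < F \<Longrightarrow> 0 < a \<Longrightarrow> a / F * N \<le> r \<Longrightarrow> N \<le> r * F / a"
    by (simp add: field_simps)
  have "D (Suc j) t \<le> c" if t: "t \<in> {0..h}" for t
    unfolding c_def using bracket[OF t] hp
    by (intro scale[OF fact_gt_zero]) (simp_all add: \<Sigma>_def)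
  then have "D 0 h \<le> (\<Sum>i<Suc j. h ^ i / fact i * D i 0) + c * (h ^ Suc j / fact (Suc j))"
    using h by (intro taylor_upper_bound derivs) auto
  also have "(\<Sum>i<Suc j. h ^ i / fact i * D i 0) = D 0 0 + h * D 1 0 + h^2 * \<Sigma>"
    unfolding \<Sigma>_def by (rule taylor_sum_split[OF j])
  also have "c * (h ^ Suc j / fact (Suc j)) = (m - \<Sigma>) * h^2"
  proof -
    have "Suc j = (j - 1) + 2" using j by simp
    then have "h ^ Suc j = h ^ (j - 1) * h^2" by (metis power_add)
    then show ?thesis unfolding c_def using hp by simp
  qed
  finally show ?thesis by (simp add: algebra_simps)
qed

lemma Kc_bound:
  fixes f :: "'a::euclidean_space \<Rightarrow> 'a" and F :: "real \<Rightarrow> 'a \<Rightarrow> 'a" and V :: "'a \<Rightarrow> real"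
    and \<phi> :: "'a \<Rightarrow> real" and x :: 'a
  defines "S \<equiv> {0..\<phi> x}" and "g \<equiv> \<lambda>h. V (x + h *\<^sub>R F h x)"
  assumes G: "Ck_on (Suc p) S g" and j: "1 \<le> j" "j \<le> p" and h: "h \<in> S" and t: "t \<in> S"
  shows "(\<Sum>i=2..j. h ^ (i - 2) / fact i * lie_iter f i V x)
           + h ^ (j - 1) / fact (j + 1) * nderiv (Suc j) S g t \<le> Kc f V F \<phi> j x"
proof -
  have S: "compact S" unfolding S_def by simp
  have cN: "continuous_on S (nderiv (Suc j) S g)" by (rule Ck_on_cont[OF G]) (use j in simp)
  show ?thesis
  proof (cases "j = 1")
    case True
    have "bdd_above (nderiv (Suc j) S g ` S)"
      by (intro bounded_imp_bdd_above compact_imp_bounded compact_continuous_image cN S)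
    then have "nderiv 2 S g t \<le> Sup (nderiv 2 S g ` S)"
      using t True by (intro cSup_upper) (auto simp: numeral_2_eq_2)
    then show ?thesis using True unfolding Kc_def Let_def S_def g_def by (simp add: numeral_2_eq_2)
  next
    case False
    define E where "E = (\<lambda>(h, s). (\<Sum>i=2..j. s ^ (i - 2) / fact i * lie_iter f i V x)
                       + s ^ (j - 1) / fact (j + 1) * nderiv (j + 1) S g h)"
    have "continuous_on (S \<times> S) (\<lambda>y. nderiv (j+1) S g (fst y))"
      by (rule continuous_on_compose2[OF cN[unfolded Suc_eq_plus1] continuous_on_fst]) auto
    then have "continuous_on (S \<times> S) E"
      unfolding E_def case_prod_beta by (intro continuous_intros) auto
    then have "bdd_above (E ` (S \<times> S))"
      by (intro bounded_imp_bdd_above compact_imp_bounded compact_continuous_image compact_Times S)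
    then have "E (t, h) \<le> Sup (E ` (S \<times> S))"
      using t h by (intro cSup_upper) auto
    then show ?thesis using False unfolding E_def Kc_def Let_def S_def g_def by simp
  qed
qed

lemma one_step_decrease:
  fixes f :: "'a::euclidean_space \<Rightarrow> 'a" and V :: "'a \<Rightarrow> real" and F :: "real \<Rightarrow> 'a \<Rightarrow> 'a"
  assumes p: "1 \<le> p"
    and coeffs: "\<And>i. i \<le> p \<Longrightarrow> nderiv i {0..\<phi> x} (\<lambda>h. V (x + h *\<^sub>R F h x)) 0 = lie_iter f i V x"
    and G: "Ck_on (p+1) {0..\<phi> x} (\<lambda>h. V (x + h *\<^sub>R F h x))"
    and K: "\<phi> x * Min ((\<lambda>j. Kc f V F \<phi> j x) ` {1..p}) \<le> (lam - 1) * lie f V x"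
    and lam: "lam \<le> 1" and lie_nonpos: "lie f V x \<le> 0"
    and h: "h \<in> {0..\<phi> x}"
  shows "V (x + h *\<^sub>R F h x) \<le> V x + lam * h * lie f V x"
proof (cases "h = 0")
  case True then show ?thesis by simp
next
  case False
  define S where "S = {0..\<phi> x}"
  define g where "g = (\<lambda>h. V (x + h *\<^sub>R F h x))"
  have GS: "Ck_on (Suc p) S g" using G unfolding S_def g_def by simp
  obtain j where j: "1 \<le> j" "j \<le> p" and jmin: "Kc f V F \<phi> j x = Min ((\<lambda>j. Kc f V F \<phi> j x) ` {1..p})"
    using Min_in[of "(\<lambda>j. Kc f V F \<phi> j x) ` {1..p}"] p by fastforce
  define m where "m = Kc f V F \<phi> j x"
  have hS: "0 < h" "{0..h} \<subseteq> S" "h \<in> S" using h False unfolding S_def by auto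
  have bracket: "(\<Sum>i=2..j. h ^ (i - 2) / fact i * nderiv i S g 0)
      = (\<Sum>i=2..j. h ^ (i - 2) / fact i * lie_iter f i V x)"
    using coeffs j unfolding S_def g_def by (intro sum.cong) auto
  have "nderiv 0 S g h \<le> nderiv 0 S g 0 + h * nderiv 1 S g 0 + h^2 * m"
  proof (rule taylor_quadratic_bound[OF j(1) hS(1), where D = "\<lambda>k. nderiv k S g"])
    fix k t assume "k < Suc j" "t \<in> {0..h}"
    then have "k < Suc p" "t \<in> S" using j hS by auto
    then show "(nderiv k S g has_vector_derivative nderiv (Suc k) S g t) (at t within {0..h})"
      by (rule has_vector_derivative_within_subset[OF Ck_on_derivs[OF GS] hS(2)])
  next
    fix t assume "t \<in> {0..h}"
    then show "(\<Sum>i=2..j. h ^ (i - 2) / fact i * nderiv i S g 0)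
               + h ^ (j - 1) / fact (j + 1) * nderiv (Suc j) S g t \<le> m"
      unfolding bracket m_def using Kc_bound[where f = f and V = V and F = F and \<phi> = \<phi> and x = x, OF GS[unfolded S_def g_def] j, of h t] hS
      unfolding S_def g_def by auto
  qed
  then have "g h \<le> g 0 + h * nderiv 1 S g 0 + h^2 * m" by (simp only: nderiv.simps(1))
  moreover have "nderiv 1 S g 0 = lie f V x"
    using coeffs[of 1] p unfolding S_def g_def by (simp add: lie_iter_def)
  moreover have "h^2 * m \<le> h * ((lam - 1) * lie f V x)"
  proof (cases "0 \<le> m")
    case True
    have "h^2 * m \<le> h * (\<phi> x * m)"
      using h True by (simp add: power2_eq_square mult.assoc mult_left_mono mult_right_mono)
    also have "\<dots> \<le> h * ((lam - 1) * lie f V x)" using h K jmin m_def by (intro mult_left_mono) auto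
    finally show ?thesis .
  next
    case False
    then have "h^2 * m \<le> 0" by (simp add: mult_nonneg_nonpos)
    also have "0 \<le> h * ((lam - 1) * lie f V x)"
      using h lam lie_nonpos by (intro mult_nonneg_nonneg mult_nonpos_nonpos) auto
    finally show ?thesis .
  qed
  ultimately show ?thesis unfolding g_def by (simp add: algebra_simps)
qed

section \<open>Hybrid systems with a discrete Lyapunov decrease\<close>

lemma pos_min_compact:
  fixes g :: "'a::metric_space \<Rightarrow> real"
  assumes "compact A" "continuous_on A g" "\<And>y. y \<in> A \<Longrightarrow> 0 < g y"
  shows "\<exists>m>0. \<forall>y\<in>A. m \<le> g y"
proof (cases "A = {}")
  case True then show ?thesis by (intro exI[of _ 1]) auto
next
  case False
  from continuous_attains_inf[OF assms(1) False assms(2)] obtain x where "x \<in> A" "\<forall>y\<in>A. g x \<le> g y" by blast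
  then show ?thesis using assms(3) by blast
qed

locale hybrid_lyapunov =
  fixes F :: "real \<Rightarrow> 'a::euclidean_space \<Rightarrow> 'a" and \<phi> :: "'a \<Rightarrow> real"
    and V W :: "'a \<Rightarrow> real" and M :: "real \<Rightarrow> real" and r lam :: real
  assumes V_cont: "continuous_on UNIV V" and V0: "V 0 = 0" and V_pos: "\<And>y. y \<noteq> 0 \<Longrightarrow> 0 < V y"
    and V_proper: "\<And>c. \<exists>R. \<forall>y. V y \<le> c \<longrightarrow> norm y \<le> R"
    and W_cont: "continuous_on UNIV W" and W_neg: "\<And>y. y \<noteq> 0 \<Longrightarrow> W y < 0" and W_nonpos: "\<And>y. W y \<le> 0"
    and decrease: "\<And>x h. h \<in> {0..\<phi> x} \<Longrightarrow> V (x + h *\<^sub>R F h x) \<le> V x + lam * h * W x"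
    and lam: "0 < lam"
    and phi_cont: "continuous_on UNIV \<phi>" and phi_pos: "\<And>x. 0 < \<phi> x" and phi_r: "\<And>x. \<phi> x \<le> r"
    and F_bound: "\<And>x h. h \<in> {0..\<phi> x} \<Longrightarrow> norm (F h x) \<le> norm x * M (norm x)"
    and M_mono: "mono_on {0..} M"
begin

abbreviation "tau u x0 \<equiv> hyb_tau F \<phi> u x0"
abbreviation "X u x0 \<equiv> hyb_X F \<phi> u x0"
abbreviation "step u x0 \<equiv> hyb_step F \<phi> u x0"

lemma seq0: "tau u x0 0 = 0" "X u x0 0 = x0"
  by (simp_all add: hyb_tau_def hyb_X_def)

lemma seqSuc: "tau u x0 (Suc i) = tau u x0 i + step u x0 i"
  "X u x0 (Suc i) = X u x0 i + step u x0 i *\<^sub>R F (step u x0 i) (X u x0 i)"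
  by (simp_all add: hyb_tau_def hyb_X_def hyb_step_def Let_def)

lemma step_pos: "0 < step u x0 i"
  unfolding hyb_step_def using phi_pos by simp

lemma tau_nonneg: "0 \<le> tau u x0 i"
  by (induction i) (simp_all add: seq0 seqSuc less_imp_le[OF step_pos])

lemma tau_mono: "incseq (tau u x0)"
  by (rule incseq_SucI) (simp add: seqSuc less_imp_le[OF step_pos])

lemma step_le: assumes "admissible_input u" shows "step u x0 i \<le> \<phi> (X u x0 i)"
proof -
  have "0 \<le> u (tau u x0 i)" using assms tau_nonneg unfolding admissible_input_def by blast
  then show ?thesis unfolding hyb_step_def using phi_pos[of "X u x0 i"]
    by (simp add: mult_left_le)
qed

lemma step_in: assumes "admissible_input u" shows "step u x0 i \<in> {0..\<phi> (X u x0 i)}"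
  using step_le[OF assms] step_pos[of u x0 i] by auto

lemma V_step: assumes "admissible_input u"
  shows "V (X u x0 (Suc i)) \<le> V (X u x0 i) + lam * step u x0 i * W (X u x0 i)"
  unfolding seqSuc by (rule decrease[OF step_in[OF assms]])

lemma V_antimono: assumes "admissible_input u" "i \<le> j" shows "V (X u x0 j) \<le> V (X u x0 i)"
proof (rule lift_Suc_antimono_le[of "\<lambda>i. V (X u x0 i)", OF _ assms(2)])
  fix n
  have "lam * step u x0 n * W (X u x0 n) \<le> 0"
    using lam step_pos[of u x0 n] W_nonpos[of "X u x0 n"] by (simp add: mult_nonneg_nonpos)
  then show "V (X u x0 (Suc n)) \<le> V (X u x0 n)" using V_step[OF assms(1), of x0 n] by linarith
qed

lemma V_le_init: assumes "admissible_input u" shows "V (X u x0 i) \<le> V x0"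
  using V_antimono[OF assms, of 0 i] by (simp add: seq0)

lemma V_nonneg: "0 \<le> V y"
  using V_pos[of y] V0 by (cases "y = 0") auto

lemma r_pos: "0 < r" using phi_pos[of 0] phi_r[of 0] by linarith

lemma interp_bound:
  assumes u: "admissible_input u" and v: "hyb_val F \<phi> u x0 t y"
  obtains i where "tau u x0 i \<le> t" "t \<le> tau u x0 (Suc i)" "t \<le> tau u x0 i + r"
    "\<And>c. norm (X u x0 i) \<le> c \<Longrightarrow> norm y \<le> norm (X u x0 i) * (1 + r * max 0 (M c))"
proof -
  from v obtain i where i: "tau u x0 i \<le> t" "t \<le> tau u x0 (Suc i)"
    and y: "y = X u x0 i + (t - tau u x0 i) *\<^sub>R F (step u x0 i) (X u x0 i)"
    unfolding hyb_val_def by blast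
  let ?X = "X u x0 i" and ?h = "step u x0 i"
  have th: "0 \<le> t - tau u x0 i" "t - tau u x0 i \<le> r"
    using i step_le[OF u, of x0 i] phi_r[of ?X] by (auto simp: seqSuc)
  have "norm y \<le> norm ?X * (1 + r * max 0 (M c))" if c: "norm ?X \<le> c" for c
  proof -
    have c0: "0 \<le> c" using c norm_ge_zero[of ?X] by linarith
    have "M (norm ?X) \<le> M c" by (rule mono_onD[OF M_mono]) (use c c0 in auto)
    then have "norm ?X * M (norm ?X) \<le> norm ?X * max 0 (M c)" by (intro mult_left_mono) auto
    then have "norm (F ?h ?X) \<le> norm ?X * max 0 (M c)" using F_bound[OF step_in[OF u, of x0 i]] by linarith
    moreover have "norm y \<le> norm ?X + (t - tau u x0 i) * norm (F ?h ?X)"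
      unfolding y using th by (metis abs_of_nonneg norm_scaleR norm_triangle_ineq)
    moreover have "(t - tau u x0 i) * norm (F ?h ?X) \<le> r * (norm ?X * max 0 (M c))"
      using th calculation(1) by (intro mult_mono) auto
    ultimately show ?thesis by (simp add: algebra_simps)
  qed
  moreover have "t \<le> tau u x0 i + r" using th by simp
  ultimately show ?thesis using that i by blast
qed

text \<open>Small values of V force small states (V is positive definite and proper).\<close>
lemma V_small: assumes "0 < e" shows "\<exists>\<eta>>0. \<forall>y. V y < \<eta> \<longrightarrow> norm y < e"
proof -
  obtain R1 where R1: "\<forall>y. V y \<le> 1 \<longrightarrow> norm y \<le> R1" using V_proper by blast
  define A where "A = {y::'a. e \<le> norm y \<and> norm y \<le> R1}"
  have "closed A" unfolding A_def
    by (intro closed_Collect_conj closed_Collect_le continuous_intros)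
  moreover have "bounded A" unfolding A_def bounded_iff by auto
  ultimately have "compact A" using compact_eq_bounded_closed by blast
  moreover have "continuous_on A V" by (rule continuous_on_subset[OF V_cont]) simp
  moreover have "0 < V y" if "y \<in> A" for y
  proof -
    have "y \<noteq> 0" using that assms unfolding A_def by auto
    then show ?thesis by (rule V_pos)
  qed
  ultimately obtain m where m: "m > 0" "\<forall>y\<in>A. m \<le> V y" using pos_min_compact by blast
  have "norm y < e" if Vy: "V y < min 1 m" for y
  proof (rule ccontr)
    assume "\<not> norm y < e"
    then have "y \<in> A" unfolding A_def using R1 Vy by auto
    then have "m \<le> V y" using m by blast
    then show False using Vy by linarith
  qed
  then show ?thesis using m(1) by (intro exI[of _ "min 1 m"]) auto
qed

lemma W_bound: assumes "0 < \<eta>" shows "\<exists>c>0. \<forall>y. norm y \<le> R \<and> \<eta> \<le> V y \<longrightarrow> W y \<le> - c"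
proof -
  define A where "A = {y. norm y \<le> R \<and> \<eta> \<le> V y}"
  have "closed A" unfolding A_def
    by (intro closed_Collect_conj closed_Collect_le continuous_intros V_cont)
  moreover have "bounded A" unfolding A_def bounded_iff by auto
  ultimately have "compact A" using compact_eq_bounded_closed by blast
  moreover have "continuous_on A (\<lambda>y. - W y)"
    by (intro continuous_on_minus continuous_on_subset[OF W_cont]) simp
  moreover have "0 < - W y" if "y \<in> A" for y
    using that assms V0 W_neg[of y] unfolding A_def by force
  ultimately obtain m where "m > 0" "\<forall>y\<in>A. m \<le> - W y" using pos_min_compact by blast
  then show ?thesis unfolding A_def by (intro exI[of _ m]) force
qed

lemma V_max: "\<exists>Vm. \<forall>y. norm y \<le> R \<longrightarrow> V y \<le> Vm"
proof -
  have "continuous_on (cball 0 R) V" by (rule continuous_on_subset[OF V_cont]) simp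
  from cont_bounded_above[OF this compact_cball] obtain Vm where "\<forall>y\<in>cball 0 R. V y \<le> Vm" by blast
  then show ?thesis by (intro exI[of _ Vm]) (simp add: mem_cball_0)
qed

text \<open>The steps are bounded below along a trajectory (phi has a positive minimum on the
  sublevel set of V containing it), so the switching times pass any bound B.\<close>
lemma tau_exceeds:
  assumes u: "admissible_input u"
  shows "\<exists>l. B < tau u x0 l"
proof -
  obtain R0 where R0: "\<forall>y. V y \<le> V x0 \<longrightarrow> norm y \<le> R0" using V_proper by blast
  obtain m where m: "m > 0" "\<forall>y\<in>cball 0 R0. m \<le> \<phi> y"
    using pos_min_compact[OF compact_cball continuous_on_subset[OF phi_cont] phi_pos] by blast
  have phiX: "m \<le> \<phi> (X u x0 i)" for i
    using R0 V_le_init[OF u] m(2) by (simp add: mem_cball_0)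
  have "bounded (u ` {0..\<bar>B\<bar>})" using u unfolding admissible_input_def by blast
  then obtain U where U: "\<forall>t\<in>{0..\<bar>B\<bar>}. norm (u t) \<le> U" unfolding bounded_iff by auto
  define d where "d = m * exp (- U)"
  have d: "0 < d" unfolding d_def using m by simp
  have linear_growth: "(\<forall>l<k. tau u x0 l \<le> \<bar>B\<bar>) \<longrightarrow> real k * d \<le> tau u x0 k" for k
  proof (induction k)
    case 0 then show ?case by (simp add: seq0)
  next
    case (Suc k)
    show ?case
    proof
      assume H: "\<forall>l<Suc k. tau u x0 l \<le> \<bar>B\<bar>"
      then have "tau u x0 k \<in> {0..\<bar>B\<bar>}" using tau_nonneg[of u x0 k] by auto
      then have "u (tau u x0 k) \<le> U" using U by force
      then have "d \<le> step u x0 k" unfolding d_def hyb_step_def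
        using phiX[of k] m(1) by (intro mult_mono) auto
      then show "real (Suc k) * d \<le> tau u x0 (Suc k)" using Suc.IH H by (simp add: seqSuc algebra_simps)
    qed
  qed
  obtain k :: nat where k: "\<bar>B\<bar> < real k * d" using ex_less_of_nat_mult[OF d] by blast
  show ?thesis
  proof (rule ccontr)
    assume "\<not> (\<exists>l. B < tau u x0 l)"
    then have "\<forall>l. tau u x0 l \<le> \<bar>B\<bar>" by (meson abs_ge_self not_le order_trans)
    then have "tau u x0 k \<le> \<bar>B\<bar>" "real k * d \<le> tau u x0 k" using linear_growth[of k] by auto
    then show False using k by linarith
  qed
qed

lemma complete: "hyb_complete F \<phi>"
  unfolding hyb_complete_def filterlim_at_top
proof (intro allI impI)
  fix x0 u Z assume u: "admissible_input u"
  obtain l where l: "Z < tau u x0 l" using tau_exceeds[OF u] by blast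
  show "\<forall>\<^sub>F n in sequentially. Z \<le> tau u x0 n"
  proof (rule eventually_sequentiallyI[of l])
    fix n assume "l \<le> n"
    then have "tau u x0 l \<le> tau u x0 n" using tau_mono incseqD by blast
    then show "Z \<le> tau u x0 n" using l by linarith
  qed
qed

definition "interp_const = 1 + r * max 0 (M 1)"

lemma interp_const_ge: "1 \<le> interp_const" unfolding interp_const_def using r_pos by simp

lemma small_state_bound:
  assumes "0 < \<epsilon>"
  obtains e' where "0 < e'" "\<And>(x::'a) c. norm x < e' \<Longrightarrow> norm x \<le> c \<Longrightarrow> c \<le> 1 \<Longrightarrow>
      norm x * (1 + r * max 0 (M c)) < \<epsilon>"
proof -
  define e' where "e' = min 1 (\<epsilon> / interp_const)"
  have e': "0 < e'" "e' \<le> 1" "e' * interp_const \<le> \<epsilon>" unfolding e'_def using assms interp_const_ge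
    by (auto simp: min_def field_simps)
  show ?thesis
  proof (rule that[OF e'(1)])
    fix x :: 'a and c assume x: "norm x < e'" "norm x \<le> c" "c \<le> 1"
    have c0: "0 \<le> c" using x norm_ge_zero[of x] by linarith
    have "M c \<le> M 1" by (rule mono_onD[OF M_mono]) (use x c0 in auto)
    then have "norm x * (1 + r * max 0 (M c)) \<le> norm x * interp_const"
      unfolding interp_const_def using r_pos by (intro mult_left_mono add_left_mono mult_left_mono) auto
    also have "\<dots> < e' * interp_const" using x interp_const_ge by (intro mult_strict_right_mono) auto
    finally show "norm x * (1 + r * max 0 (M c)) < \<epsilon>" using e'(3) by linarith
  qed
qed

lemma stable:
  "\<forall>\<epsilon>>0. \<exists>\<delta>>0. \<forall>x0 u t y. admissible_input u \<longrightarrow> norm x0 < \<delta> \<longrightarrow> t \<ge> 0 \<longrightarrow>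
         hyb_val F \<phi> u x0 t y \<longrightarrow> norm y < \<epsilon>"
proof (intro allI impI)
  fix \<epsilon> :: real assume e: "0 < \<epsilon>"
  obtain e' where e': "0 < e'" and small: "\<And>(x::'a) c. norm x < e' \<Longrightarrow> norm x \<le> c \<Longrightarrow> c \<le> 1 \<Longrightarrow>
      norm x * (1 + r * max 0 (M c)) < \<epsilon>" using small_state_bound[OF e] by blast
  obtain \<eta> where \<eta>: "\<eta> > 0" "\<forall>y. V y < \<eta> \<longrightarrow> norm y < min e' 1" using V_small[of "min e' 1"] e' by auto
  obtain \<delta> where \<delta>: "\<delta> > 0" "\<forall>x'. dist x' 0 < \<delta> \<longrightarrow> dist (V x') (V 0) < \<eta>"
    using V_cont \<eta>(1) unfolding continuous_on_iff by blast
  show "\<exists>\<delta>>0. \<forall>x0 u t y. admissible_input u \<longrightarrow> norm x0 < \<delta> \<longrightarrow> t \<ge> 0 \<longrightarrow>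
         hyb_val F \<phi> u x0 t y \<longrightarrow> norm y < \<epsilon>"
  proof (intro exI[of _ \<delta>] conjI allI impI)
    fix x0 u t y assume u: "admissible_input u" and x0: "norm x0 < \<delta>" and v: "hyb_val F \<phi> u x0 t y"
    obtain i where i: "\<And>c. norm (X u x0 i) \<le> c \<Longrightarrow> norm y \<le> norm (X u x0 i) * (1 + r * max 0 (M c))"
      using interp_bound[OF u v] by blast
    have "\<bar>V x0\<bar> < \<eta>" using \<delta>(2) x0 V0 by (simp add: dist_norm)
    then have "norm (X u x0 i) < min e' 1" using V_le_init[OF u, of x0 i] \<eta>(2) by fastforce
    then show "norm y < \<epsilon>" using i[OF order_refl] small[of "X u x0 i" "norm (X u x0 i)"] by auto
  qed (use \<delta> in auto)
qed

lemma bounded_sol: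
  "\<forall>R. \<exists>B. \<forall>x0 u t y. admissible_input u \<longrightarrow> norm x0 \<le> R \<longrightarrow> t \<ge> 0 \<longrightarrow>
         hyb_val F \<phi> u x0 t y \<longrightarrow> norm y \<le> B"
proof
  fix R
  obtain Vm where Vm: "\<forall>y. norm y \<le> R \<longrightarrow> V y \<le> Vm" using V_max by blast
  obtain R2 where R2: "\<forall>y. V y \<le> Vm \<longrightarrow> norm y \<le> R2" using V_proper by blast
  show "\<exists>B. \<forall>x0 u t y. admissible_input u \<longrightarrow> norm x0 \<le> R \<longrightarrow> t \<ge> 0 \<longrightarrow>
         hyb_val F \<phi> u x0 t y \<longrightarrow> norm y \<le> B"
  proof (intro exI[of _ "R2 * (1 + r * max 0 (M R2))"] allI impI)
    fix x0 u t y assume u: "admissible_input u" and x0: "norm x0 \<le> R" and v: "hyb_val F \<phi> u x0 t y"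
    obtain i where i: "\<And>c. norm (X u x0 i) \<le> c \<Longrightarrow> norm y \<le> norm (X u x0 i) * (1 + r * max 0 (M c))"
      using interp_bound[OF u v] by blast
    have XR: "norm (X u x0 i) \<le> R2" using V_le_init[OF u, of x0 i] Vm x0 R2 by force
    have "norm y \<le> norm (X u x0 i) * (1 + r * max 0 (M R2))" using i XR by blast
    also have "\<dots> \<le> R2 * (1 + r * max 0 (M R2))" using XR r_pos by (intro mult_right_mono) auto
    finally show "norm y \<le> R2 * (1 + r * max 0 (M R2))" .
  qed
qed

lemma V_decay_while_large:
  assumes u: "admissible_input u"
    and W_c: "\<forall>k. \<eta> \<le> V (X u x0 k) \<longrightarrow> W (X u x0 k) \<le> - c" and c: "0 < c"
  shows "(\<forall>l<k. \<eta> \<le> V (X u x0 l)) \<longrightarrow> V (X u x0 k) \<le> V x0 - lam * c * tau u x0 k"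
proof (induction k)
  case 0 then show ?case by (simp add: seq0)
next
  case (Suc k)
  show ?case
  proof
    assume H: "\<forall>l<Suc k. \<eta> \<le> V (X u x0 l)"
    then have "lam * step u x0 k * W (X u x0 k) \<le> lam * step u x0 k * (- c)"
      using W_c lam step_pos[of u x0 k] by (intro mult_left_mono) auto
    then show "V (X u x0 (Suc k)) \<le> V x0 - lam * c * tau u x0 (Suc k)"
      using V_step[OF u, of x0 k] Suc.IH H by (simp add: seqSuc algebra_simps)
  qed
qed

text \<open>Uniform attractivity, property (c) of URGAS: after time Vm/(lam c) + r the value of V
  at the last node has dropped below eta.\<close>
lemma attractive:
  "\<forall>\<epsilon>>0. \<forall>R. \<exists>T. \<forall>x0 u t y. admissible_input u \<longrightarrow> norm x0 \<le> R \<longrightarrow> t \<ge> T \<longrightarrow>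
         hyb_val F \<phi> u x0 t y \<longrightarrow> norm y \<le> \<epsilon>"
proof (intro allI impI)
  fix \<epsilon> :: real and R assume e: "0 < \<epsilon>"
  obtain e' where e': "0 < e'" and small: "\<And>(x::'a) c. norm x < e' \<Longrightarrow> norm x \<le> c \<Longrightarrow> c \<le> 1 \<Longrightarrow>
      norm x * (1 + r * max 0 (M c)) < \<epsilon>" using small_state_bound[OF e] by blast
  obtain \<eta> where \<eta>: "\<eta> > 0" "\<forall>y. V y < \<eta> \<longrightarrow> norm y < min e' 1" using V_small[of "min e' 1"] e' by auto
  obtain Vm0 where Vm0: "\<forall>y. norm y \<le> R \<longrightarrow> V y \<le> Vm0" using V_max by blast
  define Vm where "Vm = max 0 Vm0"
  have Vm: "\<forall>y. norm y \<le> R \<longrightarrow> V y \<le> Vm" using Vm0 unfolding Vm_def by force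
  obtain R2 where R2: "\<forall>y. V y \<le> Vm \<longrightarrow> norm y \<le> R2" using V_proper by blast
  obtain c where c: "c > 0" "\<forall>y. norm y \<le> R2 \<and> \<eta> \<le> V y \<longrightarrow> W y \<le> - c" using W_bound[OF \<eta>(1)] by blast
  have lc: "0 < lam * c" using lam c by simp
  show "\<exists>T. \<forall>x0 u t y. admissible_input u \<longrightarrow> norm x0 \<le> R \<longrightarrow> t \<ge> T \<longrightarrow>
         hyb_val F \<phi> u x0 t y \<longrightarrow> norm y \<le> \<epsilon>"
  proof (intro exI[of _ "Vm / (lam * c) + r"] allI impI)
    fix x0 u t y assume u: "admissible_input u" and x0: "norm x0 \<le> R" and t: "Vm / (lam * c) + r \<le> t"
      and v: "hyb_val F \<phi> u x0 t y"
    have Vx0: "V x0 \<le> Vm" using Vm x0 by blast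
    have W_c: "W (X u x0 k) \<le> - c" if "\<eta> \<le> V (X u x0 k)" for k
    proof -
      have "norm (X u x0 k) \<le> R2" using R2 V_le_init[OF u, of x0 k] Vx0 by force
      then show ?thesis using c(2) that by blast
    qed
    have decay: "(\<forall>l<k. \<eta> \<le> V (X u x0 l)) \<longrightarrow> V (X u x0 k) \<le> V x0 - lam * c * tau u x0 k" for k
      using V_decay_while_large[of u \<eta> x0 c k] u W_c c(1) by blast
    obtain i where ti: "t \<le> tau u x0 i + r"
      and i: "\<And>c. norm (X u x0 i) \<le> c \<Longrightarrow> norm y \<le> norm (X u x0 i) * (1 + r * max 0 (M c))"
      using interp_bound[OF u v] by blast
    have "Vm / (lam * c) \<le> tau u x0 i" using t ti by linarith
    then have "Vm \<le> lam * c * tau u x0 i" using lc by (simp add: pos_divide_le_eq mult.commute)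
    have "V (X u x0 i) < \<eta>"
    proof (cases "\<forall>l<i. \<eta> \<le> V (X u x0 l)")
      case True
      then have "V (X u x0 i) \<le> V x0 - lam * c * tau u x0 i" using decay[of i] by blast
      then show ?thesis using Vx0 \<eta>(1) \<open>Vm \<le> lam * c * tau u x0 i\<close> by linarith
    next
      case False
      then obtain l where "l < i" "V (X u x0 l) < \<eta>" by auto
      then show ?thesis using V_antimono[OF u, of l i x0] by linarith
    qed
    then have "norm (X u x0 i) < min e' 1" using \<eta>(2) by blast
    then show "norm y \<le> \<epsilon>" using i[OF order_refl] small[of "X u x0 i" "norm (X u x0 i)"] by force
  qed
qed

lemma URGAS: "hyb_URGAS F \<phi>"
  unfolding hyb_URGAS_def using complete stable bounded_sol attractive by blast

end

section \<open>Exponential stability\<close>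

text \<open>beta V s is the maximum of V on the closed ball of radius s; it is used to build
  the class K_infinity gain of the exponential estimate.\<close>
definition beta :: "('a::euclidean_space \<Rightarrow> real) \<Rightarrow> real \<Rightarrow> real" where
  "beta V s = Sup (V ` cball 0 s)"

lemma beta_upper:
  fixes V :: "'a::euclidean_space \<Rightarrow> real"
  assumes "continuous_on UNIV V" "norm y \<le> s"
  shows "V y \<le> beta V s"
proof -
  have "bdd_above (V ` cball 0 s)"
    by (intro bounded_imp_bdd_above compact_imp_bounded compact_continuous_image
        continuous_on_subset[OF assms(1)] compact_cball) simp
  then show ?thesis unfolding beta_def using assms(2) by (intro cSup_upper) (auto simp: mem_cball_0)
qed

lemma beta_mono:
  fixes V :: "'a::euclidean_space \<Rightarrow> real"
  assumes "continuous_on UNIV V" "0 \<le> s" "s \<le> s'"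
  shows "beta V s \<le> beta V s'"
  unfolding beta_def[of V s] using assms beta_upper[OF assms(1)]
  by (intro cSup_least) (auto simp: mem_cball_0)

lemma radial_retraction:
  fixes y :: "'a::real_normed_vector"
  assumes "norm y \<le> s" "0 \<le> s'" "s' \<le> s"
  obtains y' where "norm y' \<le> s'" "norm (y - y') \<le> s - s'"
proof (cases "norm y \<le> s'")
  case True then show ?thesis using that[of y] assms by simp
next
  case False
  then have ny: "0 < norm y" using assms by linarith
  define y' where "y' = (s' / norm y) *\<^sub>R y"
  have "norm y' = s'" unfolding y'_def using ny assms by simp
  moreover have "norm (y - y') = norm y - s'"
  proof -
    have "y - y' = (1 - s' / norm y) *\<^sub>R y" unfolding y'_def by (simp add: algebra_simps)
    then have "norm (y - y') = \<bar>1 - s' / norm y\<bar> * norm y" by simp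
    also have "\<dots> = (1 - s' / norm y) * norm y" using False ny by (simp add: field_simps)
    also have "\<dots> = norm y - s'" using ny by (simp add: field_simps)
    finally show ?thesis .
  qed
  ultimately show ?thesis using that[of y'] assms by simp
qed

lemma beta_lip:
  fixes V :: "'a::euclidean_space \<Rightarrow> real"
  assumes Vc: "continuous_on UNIV V" and L: "\<forall>a\<in>cball 0 Rb. \<forall>b\<in>cball 0 Rb. \<bar>V a - V b\<bar> \<le> L * norm (a - b)"
    and s: "0 \<le> s'" "s' \<le> s" "s \<le> Rb" and L0: "0 \<le> L"
  shows "beta V s \<le> beta V s' + L * (s - s')"
  unfolding beta_def[of V s]
proof (rule cSup_least)
  show "V ` cball 0 s \<noteq> {}" using s by auto
  fix v assume "v \<in> V ` cball 0 s"
  then obtain y where y: "norm y \<le> s" "v = V y" by (auto simp: mem_cball_0)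
  obtain y' where y': "norm y' \<le> s'" "norm (y - y') \<le> s - s'"
    using radial_retraction[OF y(1) s(1,2)] .
  have "y \<in> cball 0 Rb" "y' \<in> cball 0 Rb" using y y' s by (auto simp: mem_cball_0)
  then have "V y - V y' \<le> L * norm (y - y')" using L by fastforce
  also have "\<dots> \<le> L * (s - s')" using y' L0 by (intro mult_left_mono) auto
  finally have "V y \<le> V y' + L * (s - s')" by simp
  also have "V y' \<le> beta V s'" by (rule beta_upper[OF Vc y'(1)])
  finally show "v \<le> beta V s' + L * (s - s')" using y by simp
qed

lemma beta_cont:
  fixes V :: "'a::euclidean_space \<Rightarrow> real"
  assumes Vc: "continuous_on UNIV V"
    and Vlip: "\<And>R. \<exists>L. \<forall>a\<in>cball 0 R. \<forall>b\<in>cball 0 R. \<bar>V a - V b\<bar> \<le> L * norm (a - b)"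
  shows "continuous_on {0..} (beta V)"
  unfolding continuous_on_iff
proof (intro ballI allI impI)
  fix s0 :: real and e :: real assume s0: "s0 \<in> {0..}" and e: "0 < e"
  obtain L0 where "\<forall>a\<in>cball 0 (s0+1). \<forall>b\<in>cball 0 (s0+1). \<bar>V a - V b\<bar> \<le> L0 * norm (a - b)"
    using Vlip by blast
  then have L: "\<forall>a\<in>cball 0 (s0+1). \<forall>b\<in>cball 0 (s0+1). \<bar>V a - V b\<bar> \<le> (\<bar>L0\<bar> + 1) * norm (a - b)"
    by (smt (verit, best) mult_right_mono norm_ge_zero)
  define L where "L = \<bar>L0\<bar> + 1"
  have L_pos: "0 < L" unfolding L_def by simp
  have lip: "\<bar>beta V s - beta V s0\<bar> \<le> L * \<bar>s - s0\<bar>" if s: "0 \<le> s" "\<bar>s - s0\<bar> < 1" for s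
  proof (cases "s \<le> s0")
    case True
    then show ?thesis
      using beta_lip[OF Vc L, of s s0] beta_mono[OF Vc, of s s0] s s0 L_pos unfolding L_def by auto
  next
    case False
    then show ?thesis
      using beta_lip[OF Vc L, of s0 s] beta_mono[OF Vc, of s0 s] s s0 L_pos unfolding L_def by auto
  qed
  show "\<exists>d>0. \<forall>s\<in>{0..}. dist s s0 < d \<longrightarrow> dist (beta V s) (beta V s0) < e"
  proof (intro exI[of _ "min 1 (e / L)"] conjI ballI impI)
    show "0 < min 1 (e / L)" using e L_pos by simp
    fix s :: real assume s: "s \<in> {0..}" and d: "dist s s0 < min 1 (e / L)"
    then have "\<bar>beta V s - beta V s0\<bar> \<le> L * \<bar>s - s0\<bar>" by (intro lip) (auto simp: dist_real_def)
    also have "\<dots> < L * (e / L)" using d L_pos by (intro mult_strict_left_mono) (auto simp: dist_real_def)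
    finally show "dist (beta V s) (beta V s0) < e" using L_pos by (simp add: dist_real_def)
  qed
qed

lemma class_K_inf_gain:
  fixes \<omega> M :: "real \<Rightarrow> real"
  assumes \<omega>_cont: "continuous_on {0..} \<omega>" and \<omega>0: "\<omega> 0 = 0"
    and \<omega>_mono: "\<And>s s'. 0 \<le> s \<Longrightarrow> s \<le> s' \<Longrightarrow> \<omega> s \<le> \<omega> s'"
    and M_cont: "continuous_on {0..} M" and M_mono: "mono_on {0..} M"
    and r: "0 \<le> r" and C: "0 \<le> C"
  shows "class_K_inf (\<lambda>s. s + C * \<omega> s * (1 + r * max 0 (M (\<omega> s))))"
    (is "class_K_inf ?a")
  unfolding class_K_inf_def
proof (intro conjI)
  have \<omega>_nn: "0 \<le> \<omega> s" if "0 \<le> s" for s using \<omega>_mono[OF order_refl that] \<omega>0 by simp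
  have g_nn: "0 \<le> C * \<omega> s * (1 + r * max 0 (M (\<omega> s)))" if "0 \<le> s" for s
    using \<omega>_nn[OF that] r C by simp
  have "continuous_on {0..} (\<lambda>s. M (\<omega> s))"
    by (rule continuous_on_compose2[OF M_cont \<omega>_cont]) (use \<omega>_nn in auto)
  then show "continuous_on {0..} ?a" by (intro continuous_intros \<omega>_cont)
  show "?a 0 = 0" using \<omega>0 by simp
  show "strict_mono_on {0..} ?a"
  proof (rule strict_mono_onI)
    fix s s' :: real assume s: "s \<in> {0..}" "s' \<in> {0..}" "s < s'"
    have w: "\<omega> s \<le> \<omega> s'" using \<omega>_mono s by auto
    have m: "M (\<omega> s) \<le> M (\<omega> s')" by (rule mono_onD[OF M_mono]) (use w \<omega>_nn s in auto)
    have "\<omega> s * (1 + r * max 0 (M (\<omega> s))) \<le> \<omega> s' * (1 + r * max 0 (M (\<omega> s')))"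
      using w m r \<omega>_nn s by (intro mult_mono mult_left_mono add_left_mono) (auto simp: max_def)
    then have "C * \<omega> s * (1 + r * max 0 (M (\<omega> s))) \<le> C * \<omega> s' * (1 + r * max 0 (M (\<omega> s')))"
      using mult_left_mono[OF _ C] by (simp add: mult.assoc)
    then show "?a s < ?a s'" using s(3) by linarith
  qed
  show "filterlim ?a at_top at_top"
  proof (rule filterlim_at_top_mono[OF filterlim_ident])
    show "\<forall>\<^sub>F s in at_top. s \<le> ?a s"
      using eventually_ge_at_top[of "0::real"] by (rule eventually_mono) (use g_nn in force)
  qed
qed

context hybrid_lyapunov
begin

lemma V_exp_decay:
  assumes u: "admissible_input u" and WV: "\<And>y. W y \<le> - 2 * \<sigma> * V y"
  shows "V (X u x0 i) \<le> exp (- 2 * (\<sigma> * lam) * tau u x0 i) * V x0"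
proof (induction i)
  case 0 then show ?case by (simp add: seq0)
next
  case (Suc i)
  let ?h = "step u x0 i" and ?X = "X u x0 i" and ?a = "\<sigma> * lam"
  have "V (X u x0 (Suc i)) \<le> V ?X + lam * ?h * W ?X" by (rule V_step[OF u])
  also have "lam * ?h * W ?X \<le> lam * ?h * (- 2 * \<sigma> * V ?X)"
    using lam step_pos[of u x0 i] WV[of ?X] by (intro mult_left_mono) auto
  finally have "V (X u x0 (Suc i)) \<le> (1 + (- 2 * ?a * ?h)) * V ?X" by (simp add: algebra_simps)
  also have "\<dots> \<le> exp (- 2 * ?a * ?h) * V ?X"
    using V_nonneg[of ?X] exp_ge_add_one_self[of "- 2 * ?a * ?h"] by (intro mult_right_mono) auto
  also have "\<dots> \<le> exp (- 2 * ?a * ?h) * (exp (- 2 * ?a * tau u x0 i) * V x0)"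
    using Suc.IH by (intro mult_left_mono) auto
  also have "\<dots> = exp (- 2 * ?a * tau u x0 (Suc i)) * V x0"
    by (simp add: seqSuc algebra_simps mult_exp_exp)
  finally show ?case .
qed

lemma X_exp_decay:
  assumes u: "admissible_input u" and WV: "\<And>y. W y \<le> - 2 * \<sigma> * V y"
    and K: "0 < K" and VK: "\<And>y. K * (norm y)^2 \<le> V y"
  shows "norm (X u x0 i) \<le> exp (- (\<sigma> * lam) * tau u x0 i) * sqrt (beta V (norm x0) / K)"
proof (rule power2_le_imp_le)
  let ?e = "exp (- (\<sigma> * lam) * tau u x0 i)"
  have b: "0 \<le> beta V (norm x0)" using beta_upper[OF V_cont, of 0 "norm x0"] V0 by simp
  have "K * (norm (X u x0 i))^2 \<le> ?e\<^sup>2 * beta V (norm x0)"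
  proof -
    have "?e\<^sup>2 = exp (- 2 * (\<sigma> * lam) * tau u x0 i)" by (simp add: power2_eq_square mult_exp_exp)
    moreover have "V x0 \<le> beta V (norm x0)" by (rule beta_upper[OF V_cont order_refl])
    ultimately show ?thesis
      using VK[of "X u x0 i"] V_exp_decay[OF u WV, of x0 i] by (smt (verit) exp_gt_zero mult_left_mono)
  qed
  then show "(norm (X u x0 i))\<^sup>2 \<le> (?e * sqrt (beta V (norm x0) / K))\<^sup>2"
    using K b by (simp add: power_mult_distrib field_simps)
  show "0 \<le> ?e * sqrt (beta V (norm x0) / K)" using b K by simp
qed

text \<open>Exponential bound for the whole trajectory: interpolate between the nodes and
  pay the factor exp(a r) for the at most r time units elapsed since the last node.\<close>
lemma trajectory_exp_bound:
  assumes u: "admissible_input u" and v: "hyb_val F \<phi> u x0 t y"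
    and \<sigma>: "0 < \<sigma>" and WV: "\<And>y. W y \<le> - 2 * \<sigma> * V y"
    and K: "0 < K" and VK: "\<And>y. K * (norm y)^2 \<le> V y"
  defines "w \<equiv> sqrt (beta V (norm x0) / K)" and "a \<equiv> \<sigma> * lam"
  shows "norm y \<le> exp (- a * t) * (exp (a * r) * w * (1 + r * max 0 (M w)))"
proof -
  obtain i where ti: "t \<le> tau u x0 i + r"
    and i: "\<And>c. norm (X u x0 i) \<le> c \<Longrightarrow> norm y \<le> norm (X u x0 i) * (1 + r * max 0 (M c))"
    using interp_bound[OF u v] by blast
  let ?e = "exp (- a * tau u x0 i)"
  have a: "0 < a" unfolding a_def using \<sigma> lam by simp
  have w: "0 \<le> w" unfolding w_def using beta_upper[OF V_cont, of 0 "norm x0"] V0 K by simp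
  have X: "norm (X u x0 i) \<le> ?e * w"
    using X_exp_decay[OF u WV K VK, of x0 i] unfolding a_def w_def by simp
  have "?e \<le> 1" using a tau_nonneg[of u x0 i] by simp
  then have "?e * w \<le> w" by (intro mult_left_le_one_le w) auto
  then have "norm y \<le> norm (X u x0 i) * (1 + r * max 0 (M w))" using i X by force
  also have "\<dots> \<le> (?e * w) * (1 + r * max 0 (M w))"
    using X r_pos by (intro mult_right_mono) auto
  also have "?e \<le> exp (- a * t) * exp (a * r)"
  proof -
    have "a * t \<le> a * (tau u x0 i + r)" using ti a by (intro mult_left_mono) auto
    then show ?thesis by (simp add: mult_exp_exp algebra_simps)
  qed
  then have "(?e * w) * (1 + r * max 0 (M w)) \<le> (exp (- a * t) * exp (a * r) * w) * (1 + r * max 0 (M w))"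
    using w r_pos by (intro mult_right_mono) auto
  finally show ?thesis by (simp add: algebra_simps)
qed

lemma exp_stable:
  assumes M_cont: "continuous_on {0..} M"
    and Vlip: "\<And>R. \<exists>L. \<forall>a\<in>cball 0 R. \<forall>b\<in>cball 0 R. \<bar>V a - V b\<bar> \<le> L * norm (a - b)"
    and \<sigma>: "0 < \<sigma>" and K: "0 < K" and WV: "\<And>y. W y \<le> - 2 * \<sigma> * V y"
    and VK: "\<And>y. K * (norm y)^2 \<le> V y"
  shows "hyb_robust_K_exp_stable F \<phi>"
proof -
  define a where "a = \<sigma> * lam"
  define \<omega> where "\<omega> s = sqrt (beta V s / K)" for s
  define gain where "gain s = s + exp (a * r) * \<omega> s * (1 + r * max 0 (M (\<omega> s)))" for s
  have \<omega>_mono: "\<omega> s \<le> \<omega> s'" if "0 \<le> s" "s \<le> s'" for s s'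
    unfolding \<omega>_def using beta_mono[OF V_cont that] K by (intro real_sqrt_le_mono divide_right_mono) auto
  have "class_K_inf gain"
    unfolding gain_def
  proof (rule class_K_inf_gain[OF _ _ \<omega>_mono M_cont M_mono])
    show "continuous_on {0..} \<omega>"
      unfolding \<omega>_def by (intro continuous_intros beta_cont[OF V_cont Vlip]) (use K in auto)
    show "\<omega> 0 = 0" unfolding \<omega>_def beta_def using V0 by simp
  qed (use r_pos in auto)
  moreover have "norm y \<le> exp (- a * t) * gain (norm x0)"
    if "admissible_input u" "hyb_val F \<phi> u x0 t y" for u x0 t y
  proof -
    have "norm y \<le> exp (- a * t) * (exp (a * r) * \<omega> (norm x0) * (1 + r * max 0 (M (\<omega> (norm x0)))))"
      using trajectory_exp_bound[OF that \<sigma> WV K VK] unfolding a_def \<omega>_def .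
    also have "\<dots> \<le> exp (- a * t) * gain (norm x0)"
      unfolding gain_def by (intro mult_left_mono) auto
    finally show ?thesis .
  qed
  moreover have "0 < a" unfolding a_def using \<sigma> lam by simp
  ultimately show ?thesis
    unfolding hyb_robust_K_exp_stable_def using complete by blast
qed

end

section \<open>The main theorem\<close>

lemma lyapunov_facts:
  fixes f :: "'a::euclidean_space \<Rightarrow> 'a"
  assumes lyap: "is_lyapunov f V" and f0: "f 0 = 0" and f: "Ck 0 f"
  shows "\<exists>R. \<forall>y. V y \<le> c \<longrightarrow> norm y \<le> R"
    and "continuous_on UNIV (lie f V)"
    and "lie f V y \<le> 0"
proof -
  have V1: "Ck (Suc 0) V" and V_inf: "filterlim V at_top at_infinity"
    and lie_neg: "\<And>y. y \<noteq> 0 \<Longrightarrow> lie f V y < 0"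
    using lyap unfolding is_lyapunov_def by auto
  obtain R where "\<forall>y. R \<le> norm y \<longrightarrow> c + 1 \<le> V y"
    using V_inf unfolding filterlim_at_top eventually_at_infinity by blast
  then show "\<exists>R. \<forall>y. V y \<le> c \<longrightarrow> norm y \<le> R" by (metis add_le_same_cancel1 nle_le not_one_le_zero order_trans)
  show "continuous_on UNIV (lie f V)" using Ck_lie[OF V1 f] by simp
  have "lie f V 0 = 0" using lie_scale[OF V1, of 0 0 0] f0 unfolding lie_def by simp
  then show "lie f V y \<le> 0" using lie_neg[of y] by (cases "y = 0") auto
qed

text \<open>The flow from x exists
  because V is a Lyapunov function, and it identifies the Taylor coefficients.\<close>
lemma order_p_step_decrease:
  fixes f :: "'a::euclidean_space \<Rightarrow> 'a" and F :: "real \<Rightarrow> 'a \<Rightarrow> 'a"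
  assumes p: "1 \<le> p" and f: "Ck p f" and f0: "f 0 = 0" and V: "Ck (p+1) V"
    and lyap: "is_lyapunov f V" and \<phi>: "0 < \<phi> x"
    and F_bound: "\<forall>h\<in>{0..\<phi> x}. norm (F h x) \<le> B"
    and smooth: "Ck_on (p+1) {0..\<phi> x} (\<lambda>h. V (x + h *\<^sub>R F h x))"
    and order: "\<exists>K>0. \<forall>h\<in>{0..\<phi> x}. norm (flow f h x - x - h *\<^sub>R F h x) \<le> K * h ^ (p + 1)"
    and K: "\<phi> x * Min ((\<lambda>j. Kc f V F \<phi> j x) ` {1..p}) \<le> (lam - 1) * lie f V x"
    and lam: "lam \<le> 1" and h: "h \<in> {0..\<phi> x}"
  shows "V (x + h *\<^sub>R F h x) \<le> V x + lam * h * lie f V x"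
proof -
  have f1: "Ck 1 f" using Ck_le[OF f p] .
  have V1: "Ck 1 V" using lyap unfolding is_lyapunov_def by simp
  note facts = lyapunov_facts[OF lyap f0 Ck_le[OF f]]
  obtain R where "\<forall>y. V y \<le> V x \<longrightarrow> norm y \<le> R" using facts(1) by blast
  then obtain z where z: "ode_sol f x z" "\<And>t. 0 \<le> t \<Longrightarrow> flow f t x = z t"
    using global_flow[OF f1 V1 facts(3)] by blast
  obtain Kx where Kx: "\<forall>h\<in>{0..\<phi> x}. norm (z h - x - h *\<^sub>R F h x) \<le> Kx * h ^ (p + 1)"
    using order z(2) by auto
  have "nderiv i {0..\<phi> x} (\<lambda>h. V (x + h *\<^sub>R F h x)) 0 = lie_iter f i V x" if "i \<le> p" for i
  proof (rule taylor_coeffs_lie[OF f V \<phi> smooth _ _ Kx F_bound that])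
    show "z 0 = x" using z(1) unfolding ode_sol_def by simp
    show "\<forall>t\<in>{0..\<phi> x}. (z has_vector_derivative f (z t)) (at t within {0..\<phi> x})"
      using ode_sol_restrict[OF z(1)] \<phi> by simp
  qed
  then show ?thesis using one_step_decrease[OF p _ smooth K lam facts(3) h] by blast
qed

theorem theorem4p5:
  fixes p :: nat and f :: "real^'n \<Rightarrow> real^'n" and V :: "real^'n \<Rightarrow> real"
    and s :: nat and A :: "nat \<Rightarrow> nat \<Rightarrow> real" and b :: "nat \<Rightarrow> real"
    and \<phi> :: "real^'n \<Rightarrow> real" and r :: real and M :: "real \<Rightarrow> real" and lam :: real
  assumes p: "p \<ge> 1"
    and f_C: "Ck p f" and f0: "f 0 = 0"
    and V_C: "Ck (p + 1) V" and V_nonneg: "\<forall>x. V x \<ge> 0"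
    and V_lyap: "is_lyapunov f V"
    and consistent: "(\<Sum>i<s. b i) = 1"
    and r_pos: "r > 0"
    and phi_cont: "continuous_on UNIV \<phi>"
    and phi_range: "\<forall>x. 0 < \<phi> x \<and> \<phi> x \<le> r"
    and stages: "\<forall>x. \<forall>h\<in>{0..\<phi> x}. rk_unique_stages s A f h x"
    and M_cont: "continuous_on {0..} M" and M_mono: "mono_on {0..} M"
    and F_bound: "\<forall>x. \<forall>h\<in>{0..\<phi> x}. norm (rk_F s A b f h x) \<le> norm x * M (norm x)"
    and hyp_i: "\<forall>x. Ck_on (p + 1) {0..\<phi> x} (\<lambda>h. V (x + h *\<^sub>R rk_F s A b f h x))"
    and hyp_ii: "\<forall>x. \<exists>K>0. \<forall>h\<in>{0..\<phi> x}.
                   norm (flow f h x - x - h *\<^sub>R rk_F s A b f h x) \<le> K * h ^ (p + 1)"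
    and lam: "0 < lam" "lam < 1"
    and hyp_iii: "\<forall>x. \<phi> x * Min ((\<lambda>j. Kc f V (rk_F s A b f) \<phi> j x) ` {1..p})
                      \<le> (lam - 1) * lie f V x"
  shows "hyb_URGAS (rk_F s A b f) \<phi> \<and>
         (\<forall>\<sigma> K. \<sigma> > 0 \<longrightarrow> K > 0 \<longrightarrow>
            (\<forall>x. lie f V x \<le> - 2 * \<sigma> * V x) \<longrightarrow> (\<forall>x. V x \<ge> K * (norm x)^2) \<longrightarrow>
            hyb_robust_K_exp_stable (rk_F s A b f) \<phi>)"
proof -
  have V1: "Ck (Suc 0) V" using V_lyap unfolding is_lyapunov_def by simp
  note facts = lyapunov_facts[OF V_lyap f0 Ck_le[OF f_C]]
  have decrease: "V (x + h *\<^sub>R rk_F s A b f h x) \<le> V x + lam * h * lie f V x"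
    if "h \<in> {0..\<phi> x}" for x h
    by (rule order_p_step_decrease[OF p f_C f0 V_C V_lyap, where \<phi> = \<phi> and F = "rk_F s A b f" and x = x and B = "norm x * M (norm x)"])
       (use phi_range F_bound hyp_i hyp_ii hyp_iii lam that in auto)
  interpret hybrid_lyapunov "rk_F s A b f" \<phi> V "lie f V" M r lam
    using Ck_cont[OF V1] V_lyap facts decrease lam phi_cont phi_range F_bound M_mono
    by unfold_locales (auto simp: is_lyapunov_def)
  have V_lip: "\<exists>L. \<forall>a\<in>cball 0 R. \<forall>b\<in>cball 0 R. \<bar>V a - V b\<bar> \<le> L * norm (a - b)" for R
    using Ck1_lipschitz[OF V1, of "cball 0 R"] by simp
  show ?thesis using URGAS exp_stable[OF M_cont V_lip] by auto
qed

end
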